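(* Let $\nu\geq3$ be an integer. Let $M=\{u=F\}$ and $M'=\{u'=F'\}$ be rigid real-analytic hypersurfaces in $\mathbb{C}^3$ with $$F=m+G_3+\cdots+G_{\nu-1}+G_\nu+O(\nu+1),\qquad F'=m+G'_3+\cdots+G'_{\nu-1}+G'_\nu+O(\nu+1),$$ where $m=\frac{z\bar z+\frac12z^2\bar\zeta+\frac12\bar z^2\zeta}{1-\zeta\bar\zeta}$ and each $G_\mu,G'_\mu$ is weighted homogeneous of weight $\mu$. Suppose the biholomorphism $$z'=z+f_{\nu-1}(z,\zeta),\qquad\zeta'=\zeta+g_{\nu-2}(z,\zeta),\qquad w'=w+h_\nu(z,\zeta),$$ with $f_{\nu-1},g_{\nu-2},h_\nu$ holomorphic and weighted homogeneous of weights $\nu-1,\nu-2,\nu$ respectively, maps $M$ into $M'$. Then $G'_\mu=G_\mu$ for $3\leq\mu\leq\nu-1$, while $$G'_\nu=G_\nu-2\operatorname{Re}\Big\{\frac{\bar z+z\bar\zeta}{1-\zeta\bar\zeta}f_{\nu-1}(z,\zeta)+\frac{(\bar z+z\bar\zeta)^2}{2(1-\zeta\bar\zeta)^2}g_{\nu-2}(z,\zeta)-\frac12h_\nu(z,\zeta)\Big\},$$ all functions being evaluated at $(z,\zeta,\bar z,\bar\zeta)$.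
   Context: Coordinates on $\mathbb{C}^3$ are $(z,\zeta,w)$, $w=u+iv$. Weights: $[z]=[\bar z]=1$, $[\zeta]=[\bar\zeta]=0$, $[w]=2$; the monomial $z^a\zeta^b\bar z^c\bar\zeta^d$ has weight $a+c$. A convergent power series is weighted homogeneous of weight $\mu$ if all its monomials have weight $\mu$ (e.g. a holomorphic $f_{\mu}(z,\zeta)$ of weight $\mu$ is $z^\mu\phi(\zeta)$). $O(\mu)$ denotes a convergent power series all of whose monomials have weight $\geq\mu$. $2\operatorname{Re}\{X\}=X+\overline{X}$. *)

theory Defs
  imports "HOL-Analysis.Analysis"
begin

text \<open>A formal power series in the four variables z, zeta, conj z, conj zeta is a
  coefficient family c a b p q, standing for the monomial
  z^a zeta^b (conj z)^p (conj zeta)^q.\<close>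

type_synonym coeffs4 = "nat \<Rightarrow> nat \<Rightarrow> nat \<Rightarrow> nat \<Rightarrow> complex"

definition ps_term :: "coeffs4 \<Rightarrow> complex \<Rightarrow> complex \<Rightarrow> nat \<times> nat \<times> nat \<times> nat \<Rightarrow> complex" where
  "ps_term c z \<zeta> = (\<lambda>(a, b, p, q). c a b p q * z ^ a * \<zeta> ^ b * cnj z ^ p * cnj \<zeta> ^ q)"

definition ps_convergent :: "coeffs4 \<Rightarrow> bool" where
  "ps_convergent c \<longleftrightarrow> (\<exists>r>0. \<forall>z \<zeta>. cmod z < r \<longrightarrow> cmod \<zeta> < r \<longrightarrow>
      (\<lambda>k. norm (ps_term c z \<zeta> k)) summable_on UNIV)"

definition ps_eval :: "coeffs4 \<Rightarrow> complex \<Rightarrow> complex \<Rightarrow> complex" where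
  "ps_eval c z \<zeta> = (\<Sum>\<^sub>\<infinity>k. ps_term c z \<zeta> k)"

definition wt_hom :: "nat \<Rightarrow> coeffs4 \<Rightarrow> bool" where
  "wt_hom \<mu> c \<longleftrightarrow> (\<forall>a b p q. c a b p q \<noteq> 0 \<longrightarrow> a + p = \<mu>)"

definition wt_ge :: "nat \<Rightarrow> coeffs4 \<Rightarrow> bool" where
  "wt_ge \<mu> c \<longleftrightarrow> (\<forall>a b p q. c a b p q \<noteq> 0 \<longrightarrow> a + p \<ge> \<mu>)"

definition mfun :: "complex \<Rightarrow> complex \<Rightarrow> complex" where
  "mfun z \<zeta> = (z * cnj z + z^2 * cnj \<zeta> / 2 + cnj z ^ 2 * \<zeta> / 2) / (1 - \<zeta> * cnj \<zeta>)"

definition wt_hom_holo :: "nat \<Rightarrow> (complex \<Rightarrow> complex \<Rightarrow> complex) \<Rightarrow> bool" where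
  "wt_hom_holo \<mu> f \<longleftrightarrow> (\<exists>\<phi>. \<phi> analytic_on {0} \<and> (\<forall>z \<zeta>. f z \<zeta> = z ^ \<mu> * \<phi> \<zeta>))"

definition rigid_expansion :: "nat \<Rightarrow> (complex \<Rightarrow> complex \<Rightarrow> real) \<Rightarrow> (nat \<Rightarrow> coeffs4) \<Rightarrow> coeffs4 \<Rightarrow> bool" where
  "rigid_expansion \<nu> F G R \<longleftrightarrow>
     (\<forall>\<mu>\<in>{3..\<nu>}. wt_hom \<mu> (G \<mu>) \<and> ps_convergent (G \<mu>)) \<and>
     wt_ge (\<nu> + 1) R \<and> ps_convergent R \<and>
     (\<forall>\<^sub>F (z, \<zeta>) in nhds (0, 0).
        complex_of_real (F z \<zeta>) = mfun z \<zeta> + (\<Sum>\<mu>=3..\<nu>. ps_eval (G \<mu>) z \<zeta>) + ps_eval R z \<zeta>)"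

end

theory Submission
  imports Defs
begin

text \<open>
  Fix (z, \<zeta>) near 0 and follow the points (t z, \<zeta>), 0 < t \<le> 1. By weighted homogeneity the
  map sends (t z, \<zeta>) to (t Z, Y) with Z = z + t^(\<nu>-2) f(z, \<zeta>) and Y = \<zeta> + t^(\<nu>-2) g(z, \<zeta>),
  so F(t z, \<zeta>) + Re h(t z, \<zeta>) = F'(t Z, Y) and the two expansions give
  t^2 m(z, \<zeta>) + \<Sum> t^\<mu> G_\<mu>(z, \<zeta>) + t^\<nu> Re h(z, \<zeta>) = t^2 m(Z, Y) + \<Sum> t^\<mu> G'_\<mu>(Z, Y) + O(t^(\<nu>+1)).
  Here m(Z, Y) = m(z, \<zeta>) + 2 t^(\<nu>-2) Re{m_z f + m_\<zeta> g} + o(t^(\<nu>-2)), with m_z, m_\<zeta> the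
  holomorphic partial derivatives, and G'_\<mu>(Z, Y) = G'_\<mu>(z, \<zeta>) + O(t^(\<nu>-2)) by a Lipschitz bound.
  Hence the polynomial \<Sum> (G'_\<mu> - G_\<mu>)(z, \<zeta>) t^\<mu> + (2 Re{m_z f + m_\<zeta> g} - Re h)(z, \<zeta>) t^\<nu>
  is o(t^\<nu>), so it vanishes, which gives the identities pointwise near 0. For \<mu> < \<nu> they become
  equalities of coefficients by the identity theorem for convergent series in z, \<zeta>, conj z,
  conj \<zeta>: real rescalings of z and of \<zeta> isolate the bihomogeneous parts, and a polynomial in
  x and conj x that vanishes near 0 is zero.
\<close>

lemma poly_coeffs_eq_0_if_tendsto_0:
  fixes d :: "nat \<Rightarrow> complex"
  assumes "((\<lambda>t. (\<Sum>k\<le>n. d k * of_real t ^ k) / of_real t ^ n) \<longlongrightarrow> 0) (at_right (0::real))"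
  shows "\<forall>k\<le>n. d k = 0"
  using assms
proof (induction n arbitrary: d)
  case 0
  then have "((\<lambda>t::real. d 0) \<longlongrightarrow> 0) (at_right 0)" by simp
  then show ?case by (simp add: tendsto_const_iff)
next
  case (Suc n)
  let ?P = "\<lambda>t::real. \<Sum>k\<le>Suc n. d k * of_real t ^ k"
  have nonzero: "\<forall>\<^sub>F t in at_right (0::real). t \<noteq> 0"
    by (simp add: eventually_at_right_less eventually_mono[OF eventually_at_right_less])
  have "((\<lambda>t. ?P t / of_real t ^ Suc n * of_real t ^ Suc n) \<longlongrightarrow> 0 * 0) (at_right 0)"
    by (intro tendsto_mult Suc.prems tendsto_eq_intros tendsto_ident_at) auto
  then have "(?P \<longlongrightarrow> 0) (at_right 0)"
    unfolding mult_zero_left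
    by (rule Lim_transform_eventually[OF _ eventually_mono[OF nonzero]]) simp
  moreover have "(?P \<longlongrightarrow> (\<Sum>k\<le>Suc n. d k * of_real 0 ^ k)) (at_right 0)"
    by (intro tendsto_intros tendsto_ident_at)
  ultimately have "(\<Sum>k\<le>Suc n. d k * of_real 0 ^ k) = (0::complex)"
    using tendsto_unique trivial_limit_at_right_real by blast
  then have d0: "d 0 = 0"
    by (simp add: sum.atMost_Suc_shift del: sum.atMost_Suc)
  have "?P t / of_real t ^ Suc n = (\<Sum>k\<le>n. d (Suc k) * of_real t ^ k) / of_real t ^ n"
    if "t \<noteq> 0" for t
  proof -
    have "?P t = of_real t * (\<Sum>k\<le>n. d (Suc k) * of_real t ^ k)"
      by (simp add: sum.atMost_Suc_shift d0 sum_distrib_left algebra_simps del: sum.atMost_Suc)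
    then show ?thesis using that by (simp add: field_simps)
  qed
  then have "((\<lambda>t. (\<Sum>k\<le>n. d (Suc k) * of_real t ^ k) / of_real t ^ n) \<longlongrightarrow> 0) (at_right 0)"
    by (rule Lim_transform_eventually[OF Suc.prems eventually_mono[OF nonzero]])
  from Suc.IH[OF this] d0 show ?case
    by (metis not0_implies_Suc Suc_le_mono)
qed

lemma tendsto_at_right_0_if_norm_le_power:
  fixes E :: "real \<Rightarrow> 'a::real_normed_vector"
  assumes "m > 0" and "\<And>t. 0 < t \<Longrightarrow> t \<le> 1 \<Longrightarrow> norm (E t) \<le> C * t ^ m"
  shows "(E \<longlongrightarrow> 0) (at_right 0)"
proof (rule Lim_null_comparison)
  have "\<forall>\<^sub>F t in at_right (0::real). 0 < t \<and> t < 1"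
    by (simp add: eventually_at_right_field) (intro exI[of _ 1], auto)
  then show "\<forall>\<^sub>F t in at_right 0. norm (E t) \<le> C * t ^ m"
    by (rule eventually_mono) (use assms(2) in auto)
  show "((\<lambda>t. C * t ^ m) \<longlongrightarrow> 0) (at_right 0)"
    using assms(1) by (auto intro!: tendsto_eq_intros)
qed

lemma tendsto_power_quotient_0:
  fixes \<phi> :: "real \<Rightarrow> complex"
  assumes "\<And>t. 0 < t \<Longrightarrow> t \<le> 1 \<Longrightarrow> cmod (\<phi> t) \<le> K * t ^ k" and "n < j + k"
  shows "((\<lambda>t. of_real t ^ j * \<phi> t / of_real t ^ n) \<longlongrightarrow> 0) (at_right 0)"
proof (rule tendsto_at_right_0_if_norm_le_power[where m = "j + k - n" and C = K])
  fix t :: real assume t: "0 < t" "t \<le> 1"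
  have "t ^ j * t ^ k = t ^ n * t ^ (j + k - n)" using assms(2) by (simp flip: power_add)
  then have "t ^ j * (K * t ^ k) / t ^ n = K * t ^ (j + k - n)" using t by (simp add: field_simps)
  moreover have "norm (of_real t ^ j * \<phi> t / of_real t ^ n) \<le> t ^ j * (K * t ^ k) / t ^ n"
    using t assms(1)[OF t] by (simp add: norm_mult norm_divide norm_power divide_right_mono mult_left_mono)
  ultimately show "norm (of_real t ^ j * \<phi> t / of_real t ^ n) \<le> K * t ^ (j + k - n)" by simp
qed (use assms(2) in simp)

lemma eventually_nhds_0_polydisc:
  "(\<forall>\<^sub>F p in nhds (0::complex, 0::complex). P p) \<longleftrightarrow>
    (\<exists>\<delta>>0. \<forall>x y. cmod x < \<delta> \<longrightarrow> cmod y < \<delta> \<longrightarrow> P (x, y))"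
proof
  assume "\<forall>\<^sub>F p in nhds (0, 0). P p"
  then obtain Px Py where "\<forall>\<^sub>F x in nhds 0. Px x" "\<forall>\<^sub>F y in nhds 0. Py y"
    and P: "\<And>x y. Px x \<Longrightarrow> Py y \<Longrightarrow> P (x, y)"
    unfolding nhds_prod eventually_prod_filter by blast
  then obtain \<delta>x \<delta>y where "\<delta>x > 0" "\<delta>y > 0"
    and "\<And>x. cmod x < \<delta>x \<Longrightarrow> Px x" "\<And>y. cmod y < \<delta>y \<Longrightarrow> Py y"
    unfolding eventually_nhds_metric dist_norm diff_zero by metis
  with P show "\<exists>\<delta>>0. \<forall>x y. cmod x < \<delta> \<longrightarrow> cmod y < \<delta> \<longrightarrow> P (x, y)"
    by (intro exI[of _ "min \<delta>x \<delta>y"]) auto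
next
  assume "\<exists>\<delta>>0. \<forall>x y. cmod x < \<delta> \<longrightarrow> cmod y < \<delta> \<longrightarrow> P (x, y)"
  then obtain \<delta> where "\<delta> > 0" and P: "\<And>x y. cmod x < \<delta> \<Longrightarrow> cmod y < \<delta> \<Longrightarrow> P (x, y)" by blast
  have "\<forall>\<^sub>F x in nhds (0::complex). cmod x < \<delta>"
    using \<open>\<delta> > 0\<close> unfolding eventually_nhds_metric dist_norm diff_zero by blast
  then show "\<forall>\<^sub>F p in nhds (0, 0). P p"
    unfolding nhds_prod eventually_prod_filter using P by blast
qed

lemma norm_add_scaled_le:
  assumes "0 \<le> s" and "s \<le> 1"
  shows "cmod (u + of_real s * v) \<le> cmod u + cmod v"
proof -
  have "s * cmod v \<le> cmod v" using assms by (simp add: mult_left_le_one_le)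
  then show ?thesis using norm_triangle_ineq[of u "of_real s * v"] assms by (simp add: norm_mult)
qed

lemma norm_scaled_le:
  assumes "0 \<le> t" and "t \<le> 1"
  shows "cmod (of_real t * u) \<le> cmod u"
  using assms by (simp add: norm_mult mult_left_le_one_le)

lemma norm_mult_diff_le:
  fixes a b c d :: "'a::real_normed_algebra"
  assumes "norm a \<le> 1" and "norm d \<le> 1"
  shows "norm (a * b - c * d) \<le> norm (a - c) + norm (b - d)"
proof -
  have "a * b - c * d = a * (b - d) + (a - c) * d" by (simp add: algebra_simps)
  then have "norm (a * b - c * d) \<le> norm a * norm (b - d) + norm (a - c) * norm d"
    by (metis norm_triangle_le norm_mult_ineq add_mono)
  also have "\<dots> \<le> norm (b - d) + norm (a - c)"
    using assms by (intro add_mono mult_left_le_one_le mult_right_le_one_le) auto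
  finally show ?thesis by simp
qed

lemma norm_monomial_diff_le_unit:
  fixes x1 y1 x2 y2 :: complex
  assumes "cmod x1 \<le> 1" "cmod y1 \<le> 1" "cmod x2 \<le> 1" "cmod y2 \<le> 1"
  shows "cmod (x1 ^ a * y1 ^ b * cnj x1 ^ p * cnj y1 ^ q - x2 ^ a * y2 ^ b * cnj x2 ^ p * cnj y2 ^ q)
           \<le> real (a + b + p + q) * (cmod (x1 - x2) + cmod (y1 - y2))"
proof -
  have le1: "cmod (u ^ m) \<le> 1" if "cmod u \<le> 1" for u :: complex and m
    using that by (simp add: norm_power power_le_one)
  have "cmod (x1 ^ a * y1 ^ b * cnj x1 ^ p * cnj y1 ^ q - x2 ^ a * y2 ^ b * cnj x2 ^ p * cnj y2 ^ q)
      \<le> cmod (x1 ^ a - x2 ^ a) + cmod (y1 ^ b - y2 ^ b) + cmod (cnj x1 ^ p - cnj x2 ^ p) + cmod (cnj y1 ^ q - cnj y2 ^ q)"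
    using assms
    by (intro order.trans[OF norm_mult_diff_le] add_mono order.refl)
       (auto simp: norm_mult le1 mult_le_one)
  also have "\<dots> \<le> a * cmod (x1 - x2) + b * cmod (y1 - y2) + p * cmod (cnj x1 - cnj x2) + q * cmod (cnj y1 - cnj y2)"
    using assms by (intro add_mono norm_power_diff) auto
  also have "\<dots> = (a + p) * cmod (x1 - x2) + (b + q) * cmod (y1 - y2)"
    by (simp add: algebra_simps flip: complex_cnj_diff)
  also have "\<dots> \<le> (a + b + p + q) * (cmod (x1 - x2) + cmod (y1 - y2))"
    by (simp add: algebra_simps add_mono mult_right_mono)
  finally show ?thesis .
qed

lemma norm_monomial_diff_le:
  fixes x1 y1 x2 y2 :: complex
  assumes "\<rho> > 0" and "cmod x1 \<le> \<rho>" "cmod y1 \<le> \<rho>" "cmod x2 \<le> \<rho>" "cmod y2 \<le> \<rho>"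
  shows "\<rho> * cmod (x1 ^ a * y1 ^ b * cnj x1 ^ p * cnj y1 ^ q - x2 ^ a * y2 ^ b * cnj x2 ^ p * cnj y2 ^ q)
           \<le> real (a + b + p + q) * \<rho> ^ (a + b + p + q) * (cmod (x1 - x2) + cmod (y1 - y2))"
proof -
  define s where "s = complex_of_real \<rho>"
  have s: "s \<noteq> 0" "cmod s = \<rho>" "cnj s = s" using assms(1) by (auto simp: s_def)
  have scale: "(s * u) ^ a * (s * v) ^ b * cnj (s * u) ^ p * cnj (s * v) ^ q
      = s ^ (a + b + p + q) * (u ^ a * v ^ b * cnj u ^ p * cnj v ^ q)" for u v
    using s(3) by (simp add: power_mult_distrib power_add)
  have unit: "cmod (x1 / s) \<le> 1" "cmod (y1 / s) \<le> 1" "cmod (x2 / s) \<le> 1" "cmod (y2 / s) \<le> 1"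
    using assms s by (simp_all add: norm_divide)
  have "x1 ^ a * y1 ^ b * cnj x1 ^ p * cnj y1 ^ q - x2 ^ a * y2 ^ b * cnj x2 ^ p * cnj y2 ^ q
      = s ^ (a + b + p + q) * ((x1 / s) ^ a * (y1 / s) ^ b * cnj (x1 / s) ^ p * cnj (y1 / s) ^ q
                              - (x2 / s) ^ a * (y2 / s) ^ b * cnj (x2 / s) ^ p * cnj (y2 / s) ^ q)"
    using scale[of "x1 / s" "y1 / s"] scale[of "x2 / s" "y2 / s"] s(1) by (simp add: right_diff_distrib)
  then have "\<rho> * cmod (x1 ^ a * y1 ^ b * cnj x1 ^ p * cnj y1 ^ q - x2 ^ a * y2 ^ b * cnj x2 ^ p * cnj y2 ^ q)
      \<le> \<rho> * (\<rho> ^ (a + b + p + q) * (real (a + b + p + q) * (cmod (x1 / s - x2 / s) + cmod (y1 / s - y2 / s))))"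
    using assms(1) norm_monomial_diff_le_unit[OF unit, of a b p q] s(2)
    by (simp add: norm_mult norm_power mult_left_mono)
  also have "\<dots> = real (a + b + p + q) * \<rho> ^ (a + b + p + q) * (cmod (x1 - x2) + cmod (y1 - y2))"
    using assms(1) s by (simp add: norm_divide field_simps flip: diff_divide_distrib)
  finally show ?thesis .
qed

lemma infinite_unit_circle: "infinite {v::complex. cmod v = 1}"
proof
  assume fin: "finite {v::complex. cmod v = 1}"
  let ?arc = "\<lambda>s::real. Complex s (sqrt (1 - s\<^sup>2))"
  have "?arc ` {0..1} \<subseteq> {v. cmod v = 1}"
    by (auto simp: cmod_def power_le_one)
  then have "finite (?arc ` {0..1})" using fin by (rule finite_subset)
  moreover have "inj_on ?arc {0..1}" by (auto simp: inj_on_def)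
  ultimately have "finite {0..(1::real)}" by (rule finite_imageD)
  then show False by (simp add: infinite_Icc)
qed

lemma hom_poly_cnj_coeffs_eq_0:
  fixes e :: "nat \<Rightarrow> complex"
  assumes "\<delta> > 0" and "\<And>x. cmod x < \<delta> \<Longrightarrow> (\<Sum>a\<le>n. e a * x ^ a * cnj x ^ (n - a)) = 0"
  shows "\<forall>a\<le>n. e a = 0"
proof -
  define r where "r = \<delta> / 2"
  have r: "r > 0" "r < \<delta>" using assms(1) by (auto simp: r_def)
  have "(\<Sum>a\<le>n. e a * v ^ a) = 0" if v: "cmod v = 1" for v
  proof -
    define u where "u = csqrt v"
    have u: "cmod u = 1" "u\<^sup>2 = v" using v by (simp_all add: u_def norm_csqrt)
    have uu: "u ^ a * u ^ a = v ^ a" for a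
      by (simp add: u(2)[symmetric] power_mult[symmetric] power_add[symmetric] mult_2)
    have cnj_u: "cnj u * u = 1"
      using complex_norm_square[of u] u(1) by (simp add: mult.commute)
    define x where "x = of_real r * u"
    have "cmod x < \<delta>" using r u by (simp add: x_def norm_mult)
    \<comment> \<open>on the circle of radius r, conj x = r^2 / x turns the sum into a polynomial in v = u^2\<close>
    have "(\<Sum>a\<le>n. e a * x ^ a * cnj x ^ (n - a)) * u ^ n = of_real r ^ n * (\<Sum>a\<le>n. e a * v ^ a)"
      unfolding sum_distrib_left sum_distrib_right
    proof (rule sum.cong[OF refl])
      fix a assume "a \<in> {..n}"
      then have un: "u ^ n = u ^ a * u ^ (n - a)" and rn: "(of_real r :: complex) ^ n = of_real r ^ a * of_real r ^ (n - a)"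
        by (simp_all flip: power_add)
      have "e a * x ^ a * cnj x ^ (n - a) * u ^ n
          = e a * of_real r ^ a * of_real r ^ (n - a) * (u ^ a * u ^ a) * (cnj u * u) ^ (n - a)"
        unfolding x_def un by (simp add: power_mult_distrib algebra_simps)
      also have "\<dots> = of_real r ^ n * (e a * v ^ a)"
        using cnj_u rn uu by (simp add: mult.commute)
      finally show "e a * x ^ a * cnj x ^ (n - a) * u ^ n = of_real r ^ n * (e a * v ^ a)" .
    qed
    with assms(2)[OF \<open>cmod x < \<delta>\<close>] r show ?thesis by simp
  qed
  then have "{v. cmod v = 1} \<subseteq> {v. (\<Sum>a\<le>n. e a * v ^ a) = 0}" by auto
  then have "infinite {v. (\<Sum>a\<le>n. e a * v ^ a) = 0}"
    using infinite_unit_circle finite_subset by blast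
  then show ?thesis using polyfun_finite_roots[of e n] by blast
qed

section \<open>Absolutely summable families graded by a weight\<close>

lemma infsum_diff:
  fixes f g :: "'k \<Rightarrow> 'a::{topological_ab_group_add, t2_space}"
  assumes "f summable_on A" and "g summable_on A"
  shows "(\<Sum>\<^sub>\<infinity>k\<in>A. f k - g k) = (\<Sum>\<^sub>\<infinity>k\<in>A. f k) - (\<Sum>\<^sub>\<infinity>k\<in>A. g k)"
  using infsum_add[OF assms(1) summable_on_uminus[THEN iffD2, OF assms(2)]] by (simp add: infsum_uminus)

lemma norm_infsum_le_infsum:
  fixes f :: "'k \<Rightarrow> 'a::banach"
  assumes "g summable_on A" and "\<And>k. k \<in> A \<Longrightarrow> norm (f k) \<le> g k"
  shows "norm (\<Sum>\<^sub>\<infinity>k\<in>A. f k) \<le> (\<Sum>\<^sub>\<infinity>k\<in>A. g k)"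
proof -
  have abs: "(\<lambda>k. norm (f k)) summable_on A"
    by (rule Infinite_Sum.abs_summable_on_comparison_test'[OF assms])
  have "norm (\<Sum>\<^sub>\<infinity>k\<in>A. f k) \<le> (\<Sum>\<^sub>\<infinity>k\<in>A. norm (f k))" by (rule norm_infsum_bound[OF abs])
  also have "\<dots> \<le> (\<Sum>\<^sub>\<infinity>k\<in>A. g k)" by (rule infsum_mono[OF abs assms])
  finally show ?thesis .
qed

lemma summable_on_power_scaled:
  fixes T :: "'k \<Rightarrow> complex"
  assumes "(\<lambda>k. norm (T k)) summable_on A" and "B \<subseteq> A" and "0 \<le> t" and "t \<le> 1"
  shows "(\<lambda>k. of_real t ^ w k * T k) summable_on B"
proof (rule abs_summable_summable, rule Infinite_Sum.abs_summable_on_comparison_test)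
  show "(\<lambda>k. norm (T k)) summable_on B" using assms(1,2) summable_on_subset_banach by blast
  show "norm (of_real t ^ w k * T k) \<le> norm (T k)" for k
    using assms(3,4) by (simp add: norm_mult norm_power power_le_one mult_left_le_one_le)
qed

lemma norm_weight_part_le:
  fixes T :: "'k \<Rightarrow> complex" and w :: "'k \<Rightarrow> nat"
  assumes summ: "(\<lambda>k. norm (T k)) summable_on A" and t: "0 < t" "t \<le> 1"
    and zero: "(\<Sum>\<^sub>\<infinity>k\<in>A. of_real t ^ w k * T k) = 0"
    and lower: "(\<Sum>\<^sub>\<infinity>k\<in>{k\<in>A. w k < n}. of_real t ^ w k * T k) = 0"
  shows "norm (\<Sum>\<^sub>\<infinity>k\<in>{k\<in>A. w k = n}. T k) \<le> t * (\<Sum>\<^sub>\<infinity>k\<in>A. norm (T k))"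
proof -
  define P where "P = (\<Sum>\<^sub>\<infinity>k\<in>{k\<in>A. w k = n}. T k)"
  let ?f = "\<lambda>k. of_real t ^ w k * T k"
  let ?L = "{k\<in>A. w k < n}" and ?E = "{k\<in>A. w k = n}" and ?U = "{k\<in>A. w k > n}"
  have sm: "?f summable_on B" if "B \<subseteq> A" for B
    using summable_on_power_scaled[OF summ that] t by simp
  have AU: "A = ?L \<union> (?E \<union> ?U)" by auto
  have "(\<Sum>\<^sub>\<infinity>k\<in>A. ?f k) = (\<Sum>\<^sub>\<infinity>k\<in>?L. ?f k) + (\<Sum>\<^sub>\<infinity>k\<in>?E \<union> ?U. ?f k)"
    by (subst AU, rule infsum_Un_disjoint) (auto intro!: sm summable_on_union)
  also have "(\<Sum>\<^sub>\<infinity>k\<in>?E \<union> ?U. ?f k) = (\<Sum>\<^sub>\<infinity>k\<in>?E. ?f k) + (\<Sum>\<^sub>\<infinity>k\<in>?U. ?f k)"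
    by (rule infsum_Un_disjoint) (auto intro!: sm)
  also have "(\<Sum>\<^sub>\<infinity>k\<in>?E. ?f k) = of_real t ^ n * P"
    unfolding P_def by (subst infsum_cmult_right'[symmetric]) (rule infsum_cong, auto)
  finally have "of_real t ^ n * P = - (\<Sum>\<^sub>\<infinity>k\<in>?U. ?f k)"
    using zero lower by (simp add: eq_neg_iff_add_eq_0 add.commute)
  then have "norm (of_real t ^ n * P) = norm (\<Sum>\<^sub>\<infinity>k\<in>?U. ?f k)"
    by (simp only: norm_minus_cancel)
  then have "t ^ n * norm P = norm (\<Sum>\<^sub>\<infinity>k\<in>?U. ?f k)"
    using t by (simp add: norm_mult norm_power)
  also have "\<dots> \<le> (\<Sum>\<^sub>\<infinity>k\<in>?U. t ^ (n + 1) * norm (T k))"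
  proof (rule norm_infsum_le_infsum)
    show "(\<lambda>k. t ^ (n + 1) * norm (T k)) summable_on ?U"
      using summable_on_subset_banach[OF summ] by (intro summable_on_cmult_right) auto
    show "norm (?f k) \<le> t ^ (n + 1) * norm (T k)" if "k \<in> ?U" for k
    proof -
      have "t ^ w k \<le> t ^ (n + 1)" using that t by (intro power_decreasing) auto
      then show ?thesis using t by (simp add: norm_mult norm_power mult_right_mono)
    qed
  qed
  also have "\<dots> \<le> t ^ (n + 1) * (\<Sum>\<^sub>\<infinity>k\<in>A. norm (T k))"
    unfolding infsum_cmult_right' using t summ summable_on_subset_banach[OF summ]
    by (intro mult_left_mono infsum_mono_neutral) auto
  finally show ?thesis using t by (simp add: P_def mult.assoc)
qed

lemma weight_part_eq_0_if_lower_parts_vanish: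
  fixes T :: "'k \<Rightarrow> complex" and w :: "'k \<Rightarrow> nat"
  assumes summ: "(\<lambda>k. norm (T k)) summable_on A"
    and zero: "\<And>t. 0 < t \<Longrightarrow> t \<le> 1 \<Longrightarrow> (\<Sum>\<^sub>\<infinity>k\<in>A. of_real t ^ w k * T k) = 0"
    and lower: "\<And>t. 0 < t \<Longrightarrow> t \<le> 1 \<Longrightarrow> (\<Sum>\<^sub>\<infinity>k\<in>{k\<in>A. w k < n}. of_real t ^ w k * T k) = 0"
  shows "(\<Sum>\<^sub>\<infinity>k\<in>{k\<in>A. w k = n}. T k) = 0"
proof -
  have "norm (\<Sum>\<^sub>\<infinity>k\<in>{k\<in>A. w k = n}. T k) \<le> 0"
  proof (rule tendsto_lowerbound)
    show "((\<lambda>t. t * (\<Sum>\<^sub>\<infinity>k\<in>A. norm (T k))) \<longlongrightarrow> 0) (at_right (0::real))"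
      by (auto intro!: tendsto_eq_intros)
  qed (use norm_weight_part_le[OF summ _ _ zero lower] in
        \<open>auto simp: eventually_at_right_field intro!: exI[of _ 1]\<close>)
  then show ?thesis by simp
qed

lemma weight_parts_eq_0:
  fixes T :: "'k \<Rightarrow> complex" and w :: "'k \<Rightarrow> nat"
  assumes summ: "(\<lambda>k. norm (T k)) summable_on A"
    and zero: "\<And>t. 0 < t \<Longrightarrow> t \<le> 1 \<Longrightarrow> (\<Sum>\<^sub>\<infinity>k\<in>A. of_real t ^ w k * T k) = 0"
  shows "(\<Sum>\<^sub>\<infinity>k\<in>{k\<in>A. w k = n}. T k) = 0"
proof -
  have lower: "(\<Sum>\<^sub>\<infinity>k\<in>{k\<in>A. w k < n}. of_real t ^ w k * T k) = 0" if "0 < t" "t \<le> 1" for t n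
    using that
  proof (induction n arbitrary: t)
    case 0
    then show ?case by simp
  next
    case (Suc n)
    have "{k\<in>A. w k < Suc n} = {k\<in>A. w k < n} \<union> {k\<in>A. w k = n}" by auto
    then have "(\<Sum>\<^sub>\<infinity>k\<in>{k\<in>A. w k < Suc n}. of_real t ^ w k * T k)
        = (\<Sum>\<^sub>\<infinity>k\<in>{k\<in>A. w k < n}. of_real t ^ w k * T k) + (\<Sum>\<^sub>\<infinity>k\<in>{k\<in>A. w k = n}. of_real t ^ w k * T k)"
      using Suc.prems summ by (simp, subst infsum_Un_disjoint) (auto intro!: summable_on_power_scaled)
    also have "(\<Sum>\<^sub>\<infinity>k\<in>{k\<in>A. w k = n}. of_real t ^ w k * T k) = of_real t ^ n * (\<Sum>\<^sub>\<infinity>k\<in>{k\<in>A. w k = n}. T k)"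
      by (subst infsum_cmult_right'[symmetric]) (rule infsum_cong, auto)
    finally show ?case
      using Suc weight_part_eq_0_if_lower_parts_vanish[OF summ zero] by simp
  qed
  show ?thesis by (rule weight_part_eq_0_if_lower_parts_vanish[OF summ zero lower])
qed

section \<open>Power series in z, zeta and their conjugates\<close>

definition wt :: "nat \<times> nat \<times> nat \<times> nat \<Rightarrow> nat" where
  "wt = (\<lambda>(a, b, p, q). a + p)"

definition zeta_deg :: "nat \<times> nat \<times> nat \<times> nat \<Rightarrow> nat" where
  "zeta_deg = (\<lambda>(a, b, p, q). b + q)"

lemma ps_term_scale_z: "ps_term c (of_real t * x) y k = of_real t ^ wt k * ps_term c x y k"
  by (cases k) (simp add: ps_term_def wt_def power_mult_distrib power_add algebra_simps)

lemma ps_term_scale_zeta: "ps_term c x (of_real t * y) k = of_real t ^ zeta_deg k * ps_term c x y k"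
  by (cases k) (simp add: ps_term_def zeta_deg_def power_mult_distrib power_add algebra_simps)

lemma norm_ps_term: "norm (ps_term c x y (a, b, p, q)) = cmod (c a b p q) * cmod x ^ (a + p) * cmod y ^ (b + q)"
  by (simp add: ps_term_def norm_mult norm_power power_add)

lemma ps_term_diff:
  "ps_term (\<lambda>a b p q. c1 a b p q - c2 a b p q) x y k = ps_term c1 x y k - ps_term c2 x y k"
  by (cases k) (simp add: ps_term_def algebra_simps)

lemma ps_convergent_diff:
  assumes "ps_convergent c1" and "ps_convergent c2"
  shows "ps_convergent (\<lambda>a b p q. c1 a b p q - c2 a b p q)"
proof -
  obtain r1 where "r1 > 0"
    and summ1: "\<And>x y. cmod x < r1 \<Longrightarrow> cmod y < r1 \<Longrightarrow> (\<lambda>k. norm (ps_term c1 x y k)) summable_on UNIV"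
    using assms(1) unfolding ps_convergent_def by blast
  obtain r2 where "r2 > 0"
    and summ2: "\<And>x y. cmod x < r2 \<Longrightarrow> cmod y < r2 \<Longrightarrow> (\<lambda>k. norm (ps_term c2 x y k)) summable_on UNIV"
    using assms(2) unfolding ps_convergent_def by blast
  have summ: "(\<lambda>k. norm (ps_term (\<lambda>a b p q. c1 a b p q - c2 a b p q) x y k)) summable_on UNIV"
    if "cmod x < min r1 r2" "cmod y < min r1 r2" for x y
  proof -
    have "(\<lambda>k. norm (ps_term c1 x y k) + norm (ps_term c2 x y k)) summable_on UNIV"
      using that summ1 summ2 by (intro summable_on_add) auto
    then show ?thesis unfolding ps_term_diff
      by (rule Infinite_Sum.abs_summable_on_comparison_test') (rule norm_triangle_ineq4)
  qed
  show ?thesis unfolding ps_convergent_def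
  proof (intro exI[of _ "min r1 r2"] conjI allI impI)
    show "min r1 r2 > 0" using \<open>r1 > 0\<close> \<open>r2 > 0\<close> by simp
  qed (rule summ)
qed

lemma ps_eval_diff:
  assumes "(\<lambda>k. norm (ps_term c1 x y k)) summable_on UNIV"
    and "(\<lambda>k. norm (ps_term c2 x y k)) summable_on UNIV"
  shows "ps_eval (\<lambda>a b p q. c1 a b p q - c2 a b p q) x y = ps_eval c1 x y - ps_eval c2 x y"
  unfolding ps_eval_def ps_term_diff
  using abs_summable_summable[OF assms(1)] abs_summable_summable[OF assms(2)] by (rule infsum_diff)

lemma ps_bihomogeneous_parts_eq_0:
  assumes summ: "\<And>x y. cmod x < \<delta> \<Longrightarrow> cmod y < \<delta> \<Longrightarrow> (\<lambda>k. norm (ps_term c x y k)) summable_on UNIV"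
    and zero: "\<And>x y. cmod x < \<delta> \<Longrightarrow> cmod y < \<delta> \<Longrightarrow> ps_eval c x y = 0"
    and xy: "cmod x < \<delta>" "cmod y < \<delta>"
  shows "(\<Sum>a\<le>m. \<Sum>b\<le>n. c a b (m - a) (n - b) * x ^ a * y ^ b * cnj x ^ (m - a) * cnj y ^ (n - b)) = 0"
proof -
  have scaled: "cmod (of_real t * u) < \<delta>" if "cmod u < \<delta>" "0 < t" "t \<le> 1" for t u
    using norm_scaled_le[of t u] that by simp
  have wt_part: "(\<Sum>\<^sub>\<infinity>k\<in>{k\<in>UNIV. wt k = m}. ps_term c x y k) = 0"
    if "cmod x < \<delta>" "cmod y < \<delta>" for x y
  proof (rule weight_parts_eq_0[OF summ[OF that]])
    fix t :: real assume "0 < t" "t \<le> 1"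
    then have "ps_eval c (of_real t * x) y = 0" using zero scaled that by blast
    then show "(\<Sum>\<^sub>\<infinity>k\<in>UNIV. of_real t ^ wt k * ps_term c x y k) = 0"
      by (simp add: ps_eval_def ps_term_scale_z)
  qed
  have bihom_part: "(\<Sum>\<^sub>\<infinity>k\<in>{k\<in>{k\<in>UNIV. wt k = m}. zeta_deg k = n}. ps_term c x y k) = 0"
  proof (rule weight_parts_eq_0)
    show "(\<lambda>k. norm (ps_term c x y k)) summable_on {k\<in>UNIV. wt k = m}"
      using summable_on_subset_banach[OF summ[OF xy]] by blast
    fix t :: real assume "0 < t" "t \<le> 1"
    from wt_part[OF xy(1) scaled[OF xy(2) this]]
    show "(\<Sum>\<^sub>\<infinity>k\<in>{k\<in>UNIV. wt k = m}. of_real t ^ zeta_deg k * ps_term c x y k) = 0"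
      by (simp add: ps_term_scale_zeta)
  qed
  let ?h = "\<lambda>(a, b). (a, b, m - a, n - b)"
  have bidegree: "{k\<in>{k\<in>UNIV. wt k = m}. zeta_deg k = n} = ?h ` ({..m} \<times> {..n})"
    by (auto simp: wt_def zeta_deg_def image_iff split: prod.splits)
  have inj: "inj_on ?h ({..m} \<times> {..n})" by (auto simp: inj_on_def)
  have "(\<Sum>\<^sub>\<infinity>k\<in>{k\<in>{k\<in>UNIV. wt k = m}. zeta_deg k = n}. ps_term c x y k)
      = (\<Sum>(a, b)\<in>{..m} \<times> {..n}. ps_term c x y (a, b, m - a, n - b))"
    unfolding bidegree
    by (simp only: infsum_finite finite_imageI finite_cartesian_product finite_atMost sum.reindex[OF inj])
       (simp add: comp_def case_prod_beta)
  then show ?thesis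
    using bihom_part by (simp add: sum.cartesian_product ps_term_def)
qed

lemma ps_coeffs_eq_0_if_eval_eq_0:
  assumes conv: "ps_convergent c" and "\<delta> > 0"
    and zero: "\<And>x y. cmod x < \<delta> \<Longrightarrow> cmod y < \<delta> \<Longrightarrow> ps_eval c x y = 0"
  shows "c a b p q = 0"
proof -
  obtain r where "r > 0"
    and summ: "\<And>x y. cmod x < r \<Longrightarrow> cmod y < r \<Longrightarrow> (\<lambda>k. norm (ps_term c x y k)) summable_on UNIV"
    using conv unfolding ps_convergent_def by blast
  define \<delta>' where "\<delta>' = min \<delta> r"
  have "\<delta>' > 0" using \<open>\<delta> > 0\<close> \<open>r > 0\<close> by (simp add: \<delta>'_def)
  have summ': "(\<lambda>k. norm (ps_term c x y k)) summable_on UNIV"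
    and zero': "ps_eval c x y = 0" if "cmod x < \<delta>'" "cmod y < \<delta>'" for x y
    using that summ zero by (simp_all add: \<delta>'_def)
  have parts: "(\<Sum>a\<le>m. \<Sum>b\<le>n. c a b (m - a) (n - b) * x ^ a * y ^ b * cnj x ^ (m - a) * cnj y ^ (n - b)) = 0"
    if "cmod x < \<delta>'" "cmod y < \<delta>'" for x y m n
    by (rule ps_bihomogeneous_parts_eq_0[of \<delta>' c]) (use that summ' zero' in auto)
  have "\<forall>b'\<le>b + q. c a b' p (b + q - b') = 0"
  proof (rule hom_poly_cnj_coeffs_eq_0[OF \<open>\<delta>' > 0\<close>])
    fix y :: complex assume y: "cmod y < \<delta>'"
    have "\<forall>a'\<le>a + p. (\<Sum>b'\<le>b + q. c a' b' (a + p - a') (b + q - b') * y ^ b' * cnj y ^ (b + q - b')) = 0"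
    proof (rule hom_poly_cnj_coeffs_eq_0[OF \<open>\<delta>' > 0\<close>])
      fix x :: complex assume x: "cmod x < \<delta>'"
      show "(\<Sum>a'\<le>a + p. (\<Sum>b'\<le>b + q. c a' b' (a + p - a') (b + q - b') * y ^ b' * cnj y ^ (b + q - b'))
              * x ^ a' * cnj x ^ (a + p - a')) = 0"
        unfolding parts[OF x y, of "a + p" "b + q", symmetric]
        by (rule sum.cong[OF refl], simp only: sum_distrib_right, rule sum.cong[OF refl]) (simp add: mult_ac)
    qed
    from this[rule_format, OF le_add1[of a p]]
    show "(\<Sum>b'\<le>b + q. c a b' p (b + q - b') * y ^ b' * cnj y ^ (b + q - b')) = 0"
      by (simp only: add_diff_cancel_left')
  qed
  from this[rule_format, OF le_add1[of b q]] show ?thesis by (simp only: add_diff_cancel_left')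
qed

lemma ps_eval_eq_imp_coeffs_eq:
  assumes "ps_convergent c1" and "ps_convergent c2"
    and "\<forall>\<^sub>F (x, y) in nhds (0, 0). ps_eval c1 x y = ps_eval c2 x y"
  shows "c1 = c2"
proof -
  obtain r1 where "r1 > 0"
    and summ1: "\<And>x y. cmod x < r1 \<Longrightarrow> cmod y < r1 \<Longrightarrow> (\<lambda>k. norm (ps_term c1 x y k)) summable_on UNIV"
    using assms(1) unfolding ps_convergent_def by blast
  obtain r2 where "r2 > 0"
    and summ2: "\<And>x y. cmod x < r2 \<Longrightarrow> cmod y < r2 \<Longrightarrow> (\<lambda>k. norm (ps_term c2 x y k)) summable_on UNIV"
    using assms(2) unfolding ps_convergent_def by blast
  obtain \<delta> where "\<delta> > 0" and eq: "\<And>x y. cmod x < \<delta> \<Longrightarrow> cmod y < \<delta> \<Longrightarrow> ps_eval c1 x y = ps_eval c2 x y"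
    using assms(3) unfolding eventually_nhds_0_polydisc by auto
  have zero: "ps_eval (\<lambda>a b p q. c1 a b p q - c2 a b p q) x y = 0"
    if "cmod x < min \<delta> (min r1 r2)" "cmod y < min \<delta> (min r1 r2)" for x y
  proof -
    have "cmod x < r1" "cmod y < r1" "cmod x < r2" "cmod y < r2" "cmod x < \<delta>" "cmod y < \<delta>"
      using that by auto
    then show ?thesis using ps_eval_diff[OF summ1 summ2] eq by simp
  qed
  have "c1 a b p q - c2 a b p q = 0" for a b p q
  proof (rule ps_coeffs_eq_0_if_eval_eq_0[of "\<lambda>a b p q. c1 a b p q - c2 a b p q" "min \<delta> (min r1 r2)"])
    show "ps_convergent (\<lambda>a b p q. c1 a b p q - c2 a b p q)" by (rule ps_convergent_diff[OF assms(1,2)])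
    show "0 < min \<delta> (min r1 r2)" using \<open>\<delta> > 0\<close> \<open>r1 > 0\<close> \<open>r2 > 0\<close> by simp
  qed (rule zero; assumption)
  then show ?thesis by (intro ext) simp
qed

lemma wt_hom_imp_wt_ge: "wt_hom \<mu> c \<Longrightarrow> wt_ge \<mu> c"
  by (simp add: wt_hom_def wt_ge_def)

lemma ps_eval_scale_wt_hom:
  assumes "wt_hom \<mu> c"
  shows "ps_eval c (of_real t * x) y = of_real t ^ \<mu> * ps_eval c x y"
proof -
  have "ps_term c (of_real t * x) y k = of_real t ^ \<mu> * ps_term c x y k" for k
  proof (cases k)
    case (fields a b p q)
    then show ?thesis
      using assms unfolding wt_hom_def
      by (cases "c a b p q = 0") (auto simp: ps_term_scale_z wt_def, simp add: ps_term_def)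
  qed
  then have "ps_term c (of_real t * x) y = (\<lambda>k. of_real t ^ \<mu> * ps_term c x y k)" by (rule ext)
  then show ?thesis unfolding ps_eval_def by (simp add: infsum_cmult_right')
qed

lemma ps_eval_wt_ge_bound:
  assumes "wt_ge N c" and "ps_convergent c"
  obtains \<rho> C where "\<rho> > 0" and "C \<ge> 0"
    and "\<And>x y. cmod x \<le> \<rho> \<Longrightarrow> cmod y \<le> \<rho> \<Longrightarrow> cmod (ps_eval c x y) \<le> C * cmod x ^ N"
proof -
  obtain r where "r > 0"
    and summ: "\<And>x y. cmod x < r \<Longrightarrow> cmod y < r \<Longrightarrow> (\<lambda>k. norm (ps_term c x y k)) summable_on UNIV"
    using assms(2) unfolding ps_convergent_def by blast
  define \<rho> where "\<rho> = r / 2"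
  have "\<rho> > 0" and summ_\<rho>: "(\<lambda>k. norm (ps_term c (of_real \<rho>) (of_real \<rho>) k)) summable_on UNIV"
    using \<open>r > 0\<close> summ by (auto simp: \<rho>_def)
  define S where "S = (\<Sum>\<^sub>\<infinity>k. norm (ps_term c (of_real \<rho>) (of_real \<rho>) k))"
  have "cmod (ps_eval c x y) \<le> S / \<rho> ^ N * cmod x ^ N" if x: "cmod x \<le> \<rho>" and y: "cmod y \<le> \<rho>" for x y
  proof -
    have "norm (ps_term c x y k) \<le> (cmod x / \<rho>) ^ N * norm (ps_term c (of_real \<rho>) (of_real \<rho>) k)" for k
    proof (cases k)
      case (fields a b p q)
      show ?thesis
      proof (cases "c a b p q = 0")
        case False
        then have "N \<le> a + p" using assms(1) unfolding wt_ge_def by blast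
        then have "(cmod x / \<rho>) ^ (a + p) \<le> (cmod x / \<rho>) ^ N"
          using x \<open>\<rho> > 0\<close> by (intro power_decreasing) auto
        then have "cmod x ^ (a + p) \<le> (cmod x / \<rho>) ^ N * \<rho> ^ (a + p)"
          using \<open>\<rho> > 0\<close> by (simp add: power_divide field_simps)
        moreover have "cmod y ^ (b + q) \<le> \<rho> ^ (b + q)" using y by (intro power_mono) auto
        ultimately have "cmod x ^ (a + p) * cmod y ^ (b + q) \<le> (cmod x / \<rho>) ^ N * \<rho> ^ (a + p) * \<rho> ^ (b + q)"
          using \<open>\<rho> > 0\<close> by (intro mult_mono) auto
        from mult_left_mono[OF this, of "cmod (c a b p q)"] show ?thesis
          using \<open>\<rho> > 0\<close> unfolding fields norm_ps_term by (simp add: algebra_simps)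
      qed (simp add: fields ps_term_def)
    qed
    then have "cmod (ps_eval c x y) \<le> (\<Sum>\<^sub>\<infinity>k. (cmod x / \<rho>) ^ N * norm (ps_term c (of_real \<rho>) (of_real \<rho>) k))"
      unfolding ps_eval_def by (intro norm_infsum_le_infsum summable_on_cmult_right summ_\<rho>)
    also have "\<dots> = S / \<rho> ^ N * cmod x ^ N"
      unfolding S_def infsum_cmult_right' by (simp add: power_divide)
    finally show ?thesis .
  qed
  moreover have "S / \<rho> ^ N \<ge> 0" using \<open>\<rho> > 0\<close> by (simp add: S_def infsum_nonneg)
  ultimately show ?thesis using \<open>\<rho> > 0\<close> that by blast
qed

lemma ps_eval_tendsto_0:
  assumes "wt_ge N c" and "N > 0" and "ps_convergent c"
  shows "((\<lambda>(x, y). ps_eval c x y) \<longlongrightarrow> 0) (nhds (0, 0))"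
proof -
  obtain \<rho> C where "\<rho> > 0" "C \<ge> 0"
    and bound: "\<And>x y. cmod x \<le> \<rho> \<Longrightarrow> cmod y \<le> \<rho> \<Longrightarrow> cmod (ps_eval c x y) \<le> C * cmod x ^ N"
    using ps_eval_wt_ge_bound[OF assms(1,3)] by blast
  show ?thesis
  proof (rule Lim_null_comparison)
    show "\<forall>\<^sub>F p in nhds (0, 0). norm (case p of (x, y) \<Rightarrow> ps_eval c x y) \<le> C * cmod (fst p) ^ N"
      unfolding eventually_nhds_0_polydisc using \<open>\<rho> > 0\<close> bound by force
    have "((\<lambda>p::complex \<times> complex. C * cmod (fst p) ^ N) \<longlongrightarrow> C * cmod (fst (0::complex, 0::complex)) ^ N) (nhds (0, 0))"
      by (intro tendsto_intros filterlim_ident)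
    then show "((\<lambda>p::complex \<times> complex. C * cmod (fst p) ^ N) \<longlongrightarrow> 0) (nhds (0, 0))"
      using \<open>N > 0\<close> by (simp add: zero_power)
  qed
qed

lemma norm_ps_term_diff_le:
  assumes "\<rho> > 0" and "cmod x1 \<le> \<rho>" "cmod y1 \<le> \<rho>" "cmod x2 \<le> \<rho>" "cmod y2 \<le> \<rho>"
  shows "\<rho> * norm (ps_term c x1 y1 k - ps_term c x2 y2 k)
           \<le> norm (ps_term c (of_real (2 * \<rho>)) (of_real (2 * \<rho>)) k) * (cmod (x1 - x2) + cmod (y1 - y2))"
proof (cases k)
  case (fields a b p q)
  let ?n = "a + b + p + q" and ?D = "cmod (x1 - x2) + cmod (y1 - y2)"
  have "real ?n \<le> 2 ^ ?n"
    by (metis less_exp less_imp_le of_nat_le_iff of_nat_numeral of_nat_power)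
  then have "real ?n * \<rho> ^ ?n \<le> (2 * \<rho>) ^ ?n"
    using \<open>\<rho> > 0\<close> by (simp add: power_mult_distrib mult_right_mono)
  then have mono_bound: "\<rho> * cmod (x1 ^ a * y1 ^ b * cnj x1 ^ p * cnj y1 ^ q - x2 ^ a * y2 ^ b * cnj x2 ^ p * cnj y2 ^ q)
      \<le> (2 * \<rho>) ^ ?n * ?D"
    using norm_monomial_diff_le[OF assms, of a b p q]
    by (meson mult_right_mono order_trans add_nonneg_nonneg norm_ge_zero)
  have "ps_term c x1 y1 k - ps_term c x2 y2 k
      = c a b p q * (x1 ^ a * y1 ^ b * cnj x1 ^ p * cnj y1 ^ q - x2 ^ a * y2 ^ b * cnj x2 ^ p * cnj y2 ^ q)"
    by (simp add: fields ps_term_def algebra_simps)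
  then have "\<rho> * norm (ps_term c x1 y1 k - ps_term c x2 y2 k)
      = cmod (c a b p q) * (\<rho> * cmod (x1 ^ a * y1 ^ b * cnj x1 ^ p * cnj y1 ^ q - x2 ^ a * y2 ^ b * cnj x2 ^ p * cnj y2 ^ q))"
    by (simp only: norm_mult mult.left_commute)
  also have "\<dots> \<le> cmod (c a b p q) * ((2 * \<rho>) ^ ?n * ?D)"
    by (rule mult_left_mono[OF mono_bound norm_ge_zero])
  finally show ?thesis
    using \<open>\<rho> > 0\<close> by (simp add: fields norm_ps_term power_add mult_ac)
qed

lemma ps_eval_lipschitz:
  assumes "ps_convergent c"
  obtains \<rho> K where "\<rho> > 0"
    and "\<And>x1 y1 x2 y2. cmod x1 \<le> \<rho> \<Longrightarrow> cmod y1 \<le> \<rho> \<Longrightarrow> cmod x2 \<le> \<rho> \<Longrightarrow> cmod y2 \<le> \<rho> \<Longrightarrow>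
           cmod (ps_eval c x1 y1 - ps_eval c x2 y2) \<le> K * (cmod (x1 - x2) + cmod (y1 - y2))"
proof -
  obtain r where "r > 0"
    and summ: "\<And>x y. cmod x < r \<Longrightarrow> cmod y < r \<Longrightarrow> (\<lambda>k. norm (ps_term c x y k)) summable_on UNIV"
    using assms unfolding ps_convergent_def by blast
  define \<rho> where "\<rho> = r / 3"
  have "\<rho> > 0" using \<open>r > 0\<close> by (simp add: \<rho>_def)
  let ?P = "complex_of_real (2 * \<rho>)"
  have summ_P: "(\<lambda>k. norm (ps_term c ?P ?P k)) summable_on UNIV"
    using summ \<open>r > 0\<close> by (simp add: \<rho>_def)
  have "cmod (ps_eval c x1 y1 - ps_eval c x2 y2)
      \<le> (\<Sum>\<^sub>\<infinity>k. norm (ps_term c ?P ?P k)) / \<rho> * (cmod (x1 - x2) + cmod (y1 - y2))"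
    if b: "cmod x1 \<le> \<rho>" "cmod y1 \<le> \<rho>" "cmod x2 \<le> \<rho>" "cmod y2 \<le> \<rho>" for x1 y1 x2 y2
  proof -
    let ?D = "cmod (x1 - x2) + cmod (y1 - y2)"
    have "ps_eval c x1 y1 - ps_eval c x2 y2 = (\<Sum>\<^sub>\<infinity>k. ps_term c x1 y1 k - ps_term c x2 y2 k)"
      unfolding ps_eval_def using b \<open>r > 0\<close>
      by (intro infsum_diff[symmetric] abs_summable_summable[OF summ]) (auto simp: \<rho>_def)
    also have "cmod \<dots> \<le> (\<Sum>\<^sub>\<infinity>k. ?D / \<rho> * norm (ps_term c ?P ?P k))"
    proof (intro norm_infsum_le_infsum summable_on_cmult_right summ_P)
      show "norm (ps_term c x1 y1 k - ps_term c x2 y2 k) \<le> ?D / \<rho> * norm (ps_term c ?P ?P k)" for k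
        using norm_ps_term_diff_le[OF \<open>\<rho> > 0\<close> b, of c k] \<open>\<rho> > 0\<close> by (simp add: field_simps)
    qed
    also have "\<dots> = (\<Sum>\<^sub>\<infinity>k. norm (ps_term c ?P ?P k)) / \<rho> * ?D"
      unfolding infsum_cmult_right' by simp
    finally show ?thesis .
  qed
  with \<open>\<rho> > 0\<close> that show ?thesis by blast
qed

lemma mfun_scale: "mfun (of_real t * x) y = of_real t ^ 2 * mfun x y"
  by (simp add: mfun_def power2_eq_square field_simps)

lemma mfun_tendsto_0: "((\<lambda>(x, y). mfun x y) \<longlongrightarrow> 0) (nhds (0, 0))"
proof -
  have "((\<lambda>p::complex \<times> complex. mfun (fst p) (snd p))
          \<longlongrightarrow> mfun (fst (0::complex, 0::complex)) (snd (0::complex, 0::complex))) (nhds (0, 0))"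
    unfolding mfun_def by (intro tendsto_intros filterlim_ident) auto
  then show ?thesis unfolding case_prod_beta' by (simp add: mfun_def)
qed

text \<open>
  Writing m as the restriction of the holomorphic function
  M z w \<zeta> \<eta> = (z w + z^2 \<eta> / 2 + w^2 \<zeta> / 2) / (1 - \<zeta> \<eta>) to w = conj z, \<eta> = conj \<zeta>,
  this is the derivative of M in the holomorphic variables z, \<zeta> in direction (a, b).
  Since m is real, its derivative in a real direction is twice the real part of it.
\<close>
definition mfun_holo_deriv :: "complex \<Rightarrow> complex \<Rightarrow> complex \<Rightarrow> complex \<Rightarrow> complex" where
  "mfun_holo_deriv z \<zeta> a b = (cnj z + z * cnj \<zeta>) / (1 - \<zeta> * cnj \<zeta>) * a
                              + (cnj z + z * cnj \<zeta>)\<^sup>2 / (2 * (1 - \<zeta> * cnj \<zeta>)\<^sup>2) * b"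

lemma mfun_directional_derivative:
  fixes z \<zeta> a b :: complex
  assumes D: "1 - \<zeta> * cnj \<zeta> \<noteq> 0"
  shows "((\<lambda>s::real. (mfun (z + of_real s * a) (\<zeta> + of_real s * b) - mfun z \<zeta>) / of_real s)
          \<longlongrightarrow> complex_of_real (2 * Re (mfun_holo_deriv z \<zeta> a b))) (at 0)"
    (is "(_ \<longlongrightarrow> ?L) _")
proof -
  define \<Phi> where "\<Phi> s = ((z + s * a) * (cnj z + s * cnj a) + (z + s * a)\<^sup>2 * (cnj \<zeta> + s * cnj b) / 2
       + (cnj z + s * cnj a)\<^sup>2 * (\<zeta> + s * b) / 2) / (1 - (\<zeta> + s * b) * (cnj \<zeta> + s * cnj b))" for s
  have \<Phi>: "mfun (z + of_real s * a) (\<zeta> + of_real s * b) = \<Phi> (of_real s)" for s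
    by (simp add: mfun_def \<Phi>_def)
  define E where "E = 1 - \<zeta> * cnj \<zeta>"
  define N0 where "N0 = z * cnj z + z\<^sup>2 * cnj \<zeta> / 2 + (cnj z)\<^sup>2 * \<zeta> / 2"
  define N1 where "N1 = a * cnj z + z * cnj a + a * z * cnj \<zeta> + cnj b * z\<^sup>2 / 2 + cnj a * cnj z * \<zeta> + b * (cnj z)\<^sup>2 / 2"
  define E1 where "E1 = - (b * cnj \<zeta> + cnj b * \<zeta>)"
  have "E \<noteq> 0" using D by (simp add: E_def)
  have "(\<Phi> has_field_derivative (N1 * E - N0 * E1) / (E * E)) (at 0)"
    unfolding \<Phi>_def N1_def N0_def E1_def E_def using D
    by (auto intro!: derivative_eq_intros) (simp add: field_simps)
  moreover have "(N1 * E - N0 * E1) / (E * E) = ?L"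
  proof -
    have L: "?L = (cnj z + z * cnj \<zeta>) / E * a + (cnj z + z * cnj \<zeta>)\<^sup>2 / (2 * E\<^sup>2) * b
        + ((z + cnj z * \<zeta>) / E * cnj a + (z + cnj z * \<zeta>)\<^sup>2 / (2 * E\<^sup>2) * cnj b)"
      unfolding complex_add_cnj[symmetric] mfun_holo_deriv_def E_def by (simp add: mult.commute)
    have "N1 * E - N0 * E1 = (cnj z + z * cnj \<zeta>) * a * E + (cnj z + z * cnj \<zeta>)\<^sup>2 * b / 2
        + (z + cnj z * \<zeta>) * cnj a * E + (z + cnj z * \<zeta>)\<^sup>2 * cnj b / 2"
      unfolding N1_def N0_def E1_def E_def power2_eq_square by (simp add: field_simps)
    with \<open>E \<noteq> 0\<close> show ?thesis
      unfolding L by (simp add: field_simps power2_eq_square)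
  qed
  ultimately have "((\<lambda>s. (\<Phi> s - \<Phi> 0) / s) \<longlongrightarrow> ?L) (at 0)"
    by (simp add: has_field_derivative_iff)
  moreover have "filterlim (\<lambda>s::real. complex_of_real s) (at 0) (at 0)"
    by (rule filterlim_atI) (auto intro!: tendsto_eq_intros simp: eventually_at_filter)
  moreover have "\<Phi> 0 = mfun z \<zeta>" by (simp add: \<Phi>_def mfun_def)
  ultimately show ?thesis
    using filterlim_compose[of "\<lambda>s. (\<Phi> s - \<Phi> 0) / s"] by (simp add: \<Phi>)
qed

lemma wt_hom_holo_scale:
  assumes "wt_hom_holo k f"
  shows "f (c * z) \<zeta> = c ^ k * f z \<zeta>"
  using assms unfolding wt_hom_holo_def by (auto simp: power_mult_distrib)

lemma wt_hom_holo_tendsto_0: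
  assumes "wt_hom_holo k f" and "k > 0"
  shows "((\<lambda>(z, \<zeta>). f z \<zeta>) \<longlongrightarrow> 0) (nhds (0, 0))"
proof -
  obtain \<phi> where "\<phi> analytic_on {0}" and f: "\<And>z \<zeta>. f z \<zeta> = z ^ k * \<phi> \<zeta>"
    using assms(1) unfolding wt_hom_holo_def by blast
  from \<open>\<phi> analytic_on {0}\<close> have "isCont \<phi> 0" by (rule analytic_at_imp_isCont)
  then have "((\<lambda>p::complex \<times> complex. fst p ^ k * \<phi> (snd p))
      \<longlongrightarrow> fst (0::complex, 0::complex) ^ k * \<phi> (snd (0::complex, 0::complex))) (nhds (0, 0))"
    by (intro tendsto_intros isCont_tendsto_compose[OF _ tendsto_snd] filterlim_ident) auto
  then show ?thesis unfolding case_prod_beta' using assms(2) by (simp add: f zero_power)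
qed

definition expansion_sum :: "nat \<Rightarrow> (nat \<Rightarrow> coeffs4) \<Rightarrow> coeffs4 \<Rightarrow> complex \<Rightarrow> complex \<Rightarrow> complex" where
  "expansion_sum \<nu> G R x y = mfun x y + (\<Sum>\<mu>=3..\<nu>. ps_eval (G \<mu>) x y) + ps_eval R x y"

lemma expansion_sum_tendsto_0:
  assumes "\<forall>\<mu>\<in>{3..\<nu>}. wt_hom \<mu> (G \<mu>) \<and> ps_convergent (G \<mu>)" and "wt_ge (\<nu> + 1) R" and "ps_convergent R"
  shows "((\<lambda>(x, y). expansion_sum \<nu> G R x y) \<longlongrightarrow> 0) (nhds (0, 0))"
proof -
  have "((\<lambda>p. ps_eval (G \<mu>) (fst p) (snd p)) \<longlongrightarrow> 0) (nhds (0, 0))" if "\<mu> \<in> {3..\<nu>}" for \<mu>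
    using assms(1) that
    by (intro ps_eval_tendsto_0[of \<mu> "G \<mu>", unfolded case_prod_beta'] wt_hom_imp_wt_ge) auto
  then have "((\<lambda>p. mfun (fst p) (snd p) + (\<Sum>\<mu>=3..\<nu>. ps_eval (G \<mu>) (fst p) (snd p)) + ps_eval R (fst p) (snd p))
          \<longlongrightarrow> 0 + 0 + 0) (nhds (0, 0))"
    by (intro tendsto_add tendsto_null_sum mfun_tendsto_0[unfolded case_prod_beta']
          ps_eval_tendsto_0[OF assms(2) _ assms(3), unfolded case_prod_beta']) auto
  then show ?thesis unfolding case_prod_beta' expansion_sum_def by simp
qed

lemma rigid_expansion_tendsto_0:
  assumes "rigid_expansion \<nu> F G R"
  shows "((\<lambda>(x, y). complex_of_real (F x y)) \<longlongrightarrow> 0) (nhds (0, 0))"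
proof (rule Lim_transform_eventually)
  show "((\<lambda>(x, y). expansion_sum \<nu> G R x y) \<longlongrightarrow> 0) (nhds (0, 0))"
    using assms unfolding rigid_expansion_def by (intro expansion_sum_tendsto_0) auto
  show "\<forall>\<^sub>F p in nhds (0, 0). (case p of (x, y) \<Rightarrow> expansion_sum \<nu> G R x y) = (case p of (x, y) \<Rightarrow> complex_of_real (F x y))"
    using assms unfolding rigid_expansion_def expansion_sum_def
    by (auto elim!: eventually_mono)
qed

section \<open>Rescaling along the z-direction\<close>

locale rigid_normal_form_map =
  fixes \<nu> :: nat
    and F F' :: "complex \<Rightarrow> complex \<Rightarrow> real"
    and G G' :: "nat \<Rightarrow> coeffs4"
    and R R' :: coeffs4
    and f g h :: "complex \<Rightarrow> complex \<Rightarrow> complex"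
  assumes nu: "\<nu> \<ge> 3"
    and expansion: "rigid_expansion \<nu> F G R"
    and expansion': "rigid_expansion \<nu> F' G' R'"
    and f_hom: "wt_hom_holo (\<nu> - 1) f"
    and g_hom: "wt_hom_holo (\<nu> - 2) g"
    and h_hom: "wt_hom_holo \<nu> h"
    and maps: "\<forall>\<^sub>F (z, \<zeta>, w) in nhds (0, 0, 0).
               Re w = F z \<zeta> \<longrightarrow> Re (w + h z \<zeta>) = F' (z + f z \<zeta>) (\<zeta> + g z \<zeta>)"
begin

lemma eventually_expansions_related:
  "\<forall>\<^sub>F (z, \<zeta>) in nhds (0, 0).
     expansion_sum \<nu> G R z \<zeta> + of_real (Re (h z \<zeta>)) = expansion_sum \<nu> G' R' (z + f z \<zeta>) (\<zeta> + g z \<zeta>)"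
proof -
  have "((\<lambda>p. (fst p, snd p, complex_of_real (F (fst p) (snd p))))
          \<longlongrightarrow> (fst (0::complex, 0::complex), snd (0::complex, 0::complex), 0)) (nhds (0, 0))"
    by (intro tendsto_Pair tendsto_fst tendsto_snd filterlim_ident
          rigid_expansion_tendsto_0[OF expansion, unfolded case_prod_beta'])
  \<comment> \<open>on M the coordinate w may be taken real, w = F z \<zeta>\<close>
  with maps have on_M: "\<forall>\<^sub>F p in nhds (0, 0).
      F (fst p) (snd p) + Re (h (fst p) (snd p)) = F' (fst p + f (fst p) (snd p)) (snd p + g (fst p) (snd p))"
    unfolding filterlim_iff by (auto elim!: eventually_mono)
  have image_0: "((\<lambda>p. (fst p + f (fst p) (snd p), snd p + g (fst p) (snd p)))
          \<longlongrightarrow> (fst (0::complex, 0::complex) + 0, snd (0::complex, 0::complex) + 0)) (nhds (0, 0))"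
    using nu
    by (intro tendsto_Pair tendsto_add tendsto_fst tendsto_snd filterlim_ident
          wt_hom_holo_tendsto_0[OF f_hom, unfolded case_prod_beta']
          wt_hom_holo_tendsto_0[OF g_hom, unfolded case_prod_beta']) auto
  have "\<forall>\<^sub>F q in nhds (0, 0). complex_of_real (F' (fst q) (snd q)) = expansion_sum \<nu> G' R' (fst q) (snd q)"
    using expansion' unfolding rigid_expansion_def expansion_sum_def case_prod_beta' by simp
  from filterlim_iff[THEN iffD1, OF image_0[simplified], rule_format, OF this]
  have image: "\<forall>\<^sub>F p in nhds (0, 0). complex_of_real (F' (fst p + f (fst p) (snd p)) (snd p + g (fst p) (snd p)))
      = expansion_sum \<nu> G' R' (fst p + f (fst p) (snd p)) (snd p + g (fst p) (snd p))"
    by simp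
  have "\<forall>\<^sub>F p in nhds (0, 0). complex_of_real (F (fst p) (snd p)) = expansion_sum \<nu> G R (fst p) (snd p)"
    using expansion unfolding rigid_expansion_def expansion_sum_def case_prod_beta' by simp
  with on_M image show ?thesis
    unfolding case_prod_beta' by eventually_elim (metis of_real_add)
qed

lemma G_hom: "\<mu> \<in> {3..\<nu>} \<Longrightarrow> wt_hom \<mu> (G \<mu>)"
  and G'_hom: "\<mu> \<in> {3..\<nu>} \<Longrightarrow> wt_hom \<mu> (G' \<mu>)"
  using expansion expansion' unfolding rigid_expansion_def by auto

text \<open>The map sends (t z, \<zeta>) to (t * ray_z z \<zeta> t, ray_zeta z \<zeta> t).\<close>
definition ray_z :: "complex \<Rightarrow> complex \<Rightarrow> real \<Rightarrow> complex" where
  "ray_z z \<zeta> t = z + of_real (t ^ (\<nu> - 2)) * f z \<zeta>"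

definition ray_zeta :: "complex \<Rightarrow> complex \<Rightarrow> real \<Rightarrow> complex" where
  "ray_zeta z \<zeta> t = \<zeta> + of_real (t ^ (\<nu> - 2)) * g z \<zeta>"

lemma map_of_scaled_point:
  "of_real t * z + f (of_real t * z) \<zeta> = of_real t * ray_z z \<zeta> t"
  "\<zeta> + g (of_real t * z) \<zeta> = ray_zeta z \<zeta> t"
proof -
  have "\<nu> - 1 = Suc (\<nu> - 2)" using nu by simp
  then show "of_real t * z + f (of_real t * z) \<zeta> = of_real t * ray_z z \<zeta> t"
    unfolding wt_hom_holo_scale[OF f_hom, of "of_real t" z] ray_z_def by (simp add: algebra_simps)
  show "\<zeta> + g (of_real t * z) \<zeta> = ray_zeta z \<zeta> t"
    unfolding wt_hom_holo_scale[OF g_hom, of "of_real t" z] ray_zeta_def by simp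
qed

lemma scaled_expansions_related:
  assumes "expansion_sum \<nu> G R (of_real t * z) \<zeta> + of_real (Re (h (of_real t * z) \<zeta>))
         = expansion_sum \<nu> G' R' (of_real t * z + f (of_real t * z) \<zeta>) (\<zeta> + g (of_real t * z) \<zeta>)"
  shows "of_real t ^ 2 * mfun z \<zeta> + (\<Sum>\<mu>=3..\<nu>. of_real t ^ \<mu> * ps_eval (G \<mu>) z \<zeta>)
           + ps_eval R (of_real t * z) \<zeta> + of_real t ^ \<nu> * of_real (Re (h z \<zeta>))
         = of_real t ^ 2 * mfun (ray_z z \<zeta> t) (ray_zeta z \<zeta> t)
           + (\<Sum>\<mu>=3..\<nu>. of_real t ^ \<mu> * ps_eval (G' \<mu>) (ray_z z \<zeta> t) (ray_zeta z \<zeta> t))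
           + ps_eval R' (of_real t * ray_z z \<zeta> t) (ray_zeta z \<zeta> t)"
proof -
  have "(\<Sum>\<mu>=3..\<nu>. ps_eval (G \<mu>) (of_real t * z) \<zeta>) = (\<Sum>\<mu>=3..\<nu>. of_real t ^ \<mu> * ps_eval (G \<mu>) z \<zeta>)"
    "(\<Sum>\<mu>=3..\<nu>. ps_eval (G' \<mu>) (of_real t * ray_z z \<zeta> t) (ray_zeta z \<zeta> t))
      = (\<Sum>\<mu>=3..\<nu>. of_real t ^ \<mu> * ps_eval (G' \<mu>) (ray_z z \<zeta> t) (ray_zeta z \<zeta> t))"
    by (auto intro!: sum.cong ps_eval_scale_wt_hom G_hom G'_hom)
  moreover have "Re (h (of_real t * z) \<zeta>) = t ^ \<nu> * Re (h z \<zeta>)"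
    unfolding wt_hom_holo_scale[OF h_hom, of "of_real t" z] by (simp flip: of_real_power)
  ultimately show ?thesis
    using assms unfolding map_of_scaled_point expansion_sum_def by (simp add: mfun_scale)
qed

lemma ray_mfun_quotient_tendsto:
  assumes "cmod \<zeta> < 1"
  shows "((\<lambda>t. (mfun (ray_z z \<zeta> t) (ray_zeta z \<zeta> t) - mfun z \<zeta>) / of_real (t ^ (\<nu> - 2)))
          \<longlongrightarrow> complex_of_real (2 * Re (mfun_holo_deriv z \<zeta> (f z \<zeta>) (g z \<zeta>)))) (at_right 0)"
proof -
  have "1 - \<zeta> * cnj \<zeta> \<noteq> 0"
  proof
    assume "1 - \<zeta> * cnj \<zeta> = 0"
    then have "complex_of_real ((cmod \<zeta>)\<^sup>2) = 1" using complex_norm_square[of \<zeta>] by simp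
    then have "(cmod \<zeta>)\<^sup>2 = 1" using of_real_eq_1_iff by blast
    with assms power_strict_mono[of "cmod \<zeta>" 1 2] show False by simp
  qed
  moreover have "filterlim (\<lambda>t::real. t ^ (\<nu> - 2)) (at 0) (at_right 0)"
  proof (rule filterlim_atI)
    show "((\<lambda>t::real. t ^ (\<nu> - 2)) \<longlongrightarrow> 0) (at_right 0)"
      using nu by (auto intro!: tendsto_eq_intros)
    show "\<forall>\<^sub>F t in at_right 0. (t::real) ^ (\<nu> - 2) \<noteq> 0"
      by (rule eventually_mono[OF eventually_at_right_less]) simp
  qed
  ultimately show ?thesis
    unfolding ray_z_def ray_zeta_def by (rule filterlim_compose[OF mfun_directional_derivative])
qed

lemma ray_G'_quotient_tendsto_0:
  assumes "\<And>\<mu>. \<mu> \<in> {3..\<nu>} \<Longrightarrow> \<exists>K. \<forall>t. 0 < t \<longrightarrow> t \<le> 1 \<longrightarrow>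
             cmod (ps_eval (G' \<mu>) (ray_z z \<zeta> t) (ray_zeta z \<zeta> t) - ps_eval (G' \<mu>) z \<zeta>) \<le> K * t ^ (\<nu> - 2)"
  shows "((\<lambda>t. \<Sum>\<mu>=3..\<nu>. of_real t ^ \<mu> * (ps_eval (G' \<mu>) (ray_z z \<zeta> t) (ray_zeta z \<zeta> t) - ps_eval (G' \<mu>) z \<zeta>)
             / of_real t ^ \<nu>) \<longlongrightarrow> 0) (at_right 0)"
proof (rule tendsto_null_sum)
  fix \<mu> assume \<mu>: "\<mu> \<in> {3..\<nu>}"
  then obtain K where K: "\<And>t. 0 < t \<Longrightarrow> t \<le> 1 \<Longrightarrow>
      cmod (ps_eval (G' \<mu>) (ray_z z \<zeta> t) (ray_zeta z \<zeta> t) - ps_eval (G' \<mu>) z \<zeta>) \<le> K * t ^ (\<nu> - 2)"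
    using assms by blast
  show "((\<lambda>t. of_real t ^ \<mu> * (ps_eval (G' \<mu>) (ray_z z \<zeta> t) (ray_zeta z \<zeta> t) - ps_eval (G' \<mu>) z \<zeta>)
           / of_real t ^ \<nu>) \<longlongrightarrow> 0) (at_right 0)"
    by (rule tendsto_power_quotient_0[OF K]) (use \<mu> nu in auto)
qed

lemma ray_defect_identity:
  fixes L :: complex
  assumes t: "0 < t" "t \<le> 1"
    and related: "expansion_sum \<nu> G R (of_real t * z) \<zeta> + of_real (Re (h (of_real t * z) \<zeta>))
         = expansion_sum \<nu> G' R' (of_real t * z + f (of_real t * z) \<zeta>) (\<zeta> + g (of_real t * z) \<zeta>)"
  shows "((\<Sum>\<mu>=3..\<nu>. (ps_eval (G' \<mu>) z \<zeta> - ps_eval (G \<mu>) z \<zeta>) * of_real t ^ \<mu>)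
            + (L - of_real (Re (h z \<zeta>))) * of_real t ^ \<nu>) / of_real t ^ \<nu>
       = - (((mfun (ray_z z \<zeta> t) (ray_zeta z \<zeta> t) - mfun z \<zeta>) / of_real (t ^ (\<nu> - 2)) - L)
            + (\<Sum>\<mu>=3..\<nu>. of_real t ^ \<mu> * (ps_eval (G' \<mu>) (ray_z z \<zeta> t) (ray_zeta z \<zeta> t) - ps_eval (G' \<mu>) z \<zeta>)
                        / of_real t ^ \<nu>)
            + ps_eval R' (of_real t * ray_z z \<zeta> t) (ray_zeta z \<zeta> t) / of_real t ^ \<nu>
            - ps_eval R (of_real t * z) \<zeta> / of_real t ^ \<nu>)"
    (is "?P / _ = - (?E1 + ?E2 + ?E3 - ?E4)")
proof -
  let ?T = "complex_of_real t" and ?S = "complex_of_real (t ^ (\<nu> - 2))"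
  let ?m = "mfun (ray_z z \<zeta> t) (ray_zeta z \<zeta> t)"
  let ?G' = "\<lambda>\<mu>. ps_eval (G' \<mu>) (ray_z z \<zeta> t) (ray_zeta z \<zeta> t)"
  have "2 + (\<nu> - 2) = \<nu>" using nu by simp
  moreover have "?T ^ (2 + (\<nu> - 2)) = ?T\<^sup>2 * ?S" by (simp only: power_add of_real_power)
  ultimately have T: "?T ^ \<nu> = ?T\<^sup>2 * ?S" "?T \<noteq> 0" "?S \<noteq> 0"
    using t by simp_all
  have "?P = - (?T\<^sup>2 * ((?m - mfun z \<zeta>) - ?S * L)
               + (\<Sum>\<mu>=3..\<nu>. ?T ^ \<mu> * (?G' \<mu> - ps_eval (G' \<mu>) z \<zeta>))
               + ps_eval R' (?T * ray_z z \<zeta> t) (ray_zeta z \<zeta> t) - ps_eval R (?T * z) \<zeta>)"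
    using scaled_expansions_related[OF related] T(1)
    by (simp add: algebra_simps sum_subtractf sum.distrib)
  then have "?P / ?T ^ \<nu> = - (?T\<^sup>2 * ((?m - mfun z \<zeta>) - ?S * L) / ?T ^ \<nu>
      + (\<Sum>\<mu>=3..\<nu>. ?T ^ \<mu> * (?G' \<mu> - ps_eval (G' \<mu>) z \<zeta>)) / ?T ^ \<nu> + ?E3 - ?E4)"
    by (simp add: add_divide_distrib diff_divide_distrib)
  also have "?T\<^sup>2 * ((?m - mfun z \<zeta>) - ?S * L) / ?T ^ \<nu> = ?E1"
    using T by (simp add: field_simps)
  finally show ?thesis by (simp add: sum_divide_distrib)
qed

lemma ray_defect_tendsto_0:
  assumes \<zeta>: "cmod \<zeta> < 1"
    and related: "\<And>t. 0 < t \<Longrightarrow> t \<le> 1 \<Longrightarrow>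
           expansion_sum \<nu> G R (of_real t * z) \<zeta> + of_real (Re (h (of_real t * z) \<zeta>))
         = expansion_sum \<nu> G' R' (of_real t * z + f (of_real t * z) \<zeta>) (\<zeta> + g (of_real t * z) \<zeta>)"
    and G'_lipschitz: "\<And>\<mu>. \<mu> \<in> {3..\<nu>} \<Longrightarrow> \<exists>K. \<forall>t. 0 < t \<longrightarrow> t \<le> 1 \<longrightarrow>
           cmod (ps_eval (G' \<mu>) (ray_z z \<zeta> t) (ray_zeta z \<zeta> t) - ps_eval (G' \<mu>) z \<zeta>) \<le> K * t ^ (\<nu> - 2)"
    and R_bound: "\<exists>C. \<forall>t. 0 < t \<longrightarrow> t \<le> 1 \<longrightarrow> cmod (ps_eval R (of_real t * z) \<zeta>) \<le> C * t ^ (\<nu> + 1)"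
    and R'_bound: "\<exists>C. \<forall>t. 0 < t \<longrightarrow> t \<le> 1 \<longrightarrow>
           cmod (ps_eval R' (of_real t * ray_z z \<zeta> t) (ray_zeta z \<zeta> t)) \<le> C * t ^ (\<nu> + 1)"
  shows "((\<lambda>t. ((\<Sum>\<mu>=3..\<nu>. (ps_eval (G' \<mu>) z \<zeta> - ps_eval (G \<mu>) z \<zeta>) * of_real t ^ \<mu>)
              + (of_real (2 * Re (mfun_holo_deriv z \<zeta> (f z \<zeta>) (g z \<zeta>))) - of_real (Re (h z \<zeta>))) * of_real t ^ \<nu>)
            / of_real t ^ \<nu>) \<longlongrightarrow> 0) (at_right 0)"
proof -
  define L where "L = complex_of_real (2 * Re (mfun_holo_deriv z \<zeta> (f z \<zeta>) (g z \<zeta>)))"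
  obtain C C' where C: "\<And>t. 0 < t \<Longrightarrow> t \<le> 1 \<Longrightarrow> cmod (ps_eval R (of_real t * z) \<zeta>) \<le> C * t ^ (\<nu> + 1)"
    and C': "\<And>t. 0 < t \<Longrightarrow> t \<le> 1 \<Longrightarrow>
      cmod (ps_eval R' (of_real t * ray_z z \<zeta> t) (ray_zeta z \<zeta> t)) \<le> C' * t ^ (\<nu> + 1)"
    using R_bound R'_bound by blast
  have "((\<lambda>t. - (((mfun (ray_z z \<zeta> t) (ray_zeta z \<zeta> t) - mfun z \<zeta>) / of_real (t ^ (\<nu> - 2)) - L)
            + (\<Sum>\<mu>=3..\<nu>. of_real t ^ \<mu> * (ps_eval (G' \<mu>) (ray_z z \<zeta> t) (ray_zeta z \<zeta> t) - ps_eval (G' \<mu>) z \<zeta>)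
                        / of_real t ^ \<nu>)
            + ps_eval R' (of_real t * ray_z z \<zeta> t) (ray_zeta z \<zeta> t) / of_real t ^ \<nu>
            - ps_eval R (of_real t * z) \<zeta> / of_real t ^ \<nu>)) \<longlongrightarrow> - ((L - L) + 0 + 0 - 0)) (at_right 0)"
    (is "(?E \<longlongrightarrow> _) _")
    unfolding L_def
    by (intro tendsto_minus tendsto_add tendsto_diff tendsto_const ray_mfun_quotient_tendsto[OF \<zeta>]
          ray_G'_quotient_tendsto_0 G'_lipschitz
          tendsto_power_quotient_0[where j = 0, simplified, OF C] tendsto_power_quotient_0[where j = 0, simplified, OF C'])
       auto
  then have "(?E \<longlongrightarrow> 0) (at_right 0)" by simp
  then show ?thesis
    unfolding L_def[symmetric]
  proof (rule Lim_transform_eventually)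
    show "\<forall>\<^sub>F t in at_right 0. ?E t = ((\<Sum>\<mu>=3..\<nu>. (ps_eval (G' \<mu>) z \<zeta> - ps_eval (G \<mu>) z \<zeta>) * of_real t ^ \<mu>)
              + (L - of_real (Re (h z \<zeta>))) * of_real t ^ \<nu>) / of_real t ^ \<nu>"
      using ray_defect_identity[OF _ _ related] by (auto simp: eventually_at_right_field intro!: exI[of _ 1])
  qed
qed

lemma ray_coefficients:
  assumes "cmod \<zeta> < 1"
    and "\<And>t. 0 < t \<Longrightarrow> t \<le> 1 \<Longrightarrow>
           expansion_sum \<nu> G R (of_real t * z) \<zeta> + of_real (Re (h (of_real t * z) \<zeta>))
         = expansion_sum \<nu> G' R' (of_real t * z + f (of_real t * z) \<zeta>) (\<zeta> + g (of_real t * z) \<zeta>)"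
    and "\<And>\<mu>. \<mu> \<in> {3..\<nu>} \<Longrightarrow> \<exists>K. \<forall>t. 0 < t \<longrightarrow> t \<le> 1 \<longrightarrow>
           cmod (ps_eval (G' \<mu>) (ray_z z \<zeta> t) (ray_zeta z \<zeta> t) - ps_eval (G' \<mu>) z \<zeta>) \<le> K * t ^ (\<nu> - 2)"
    and "\<exists>C. \<forall>t. 0 < t \<longrightarrow> t \<le> 1 \<longrightarrow> cmod (ps_eval R (of_real t * z) \<zeta>) \<le> C * t ^ (\<nu> + 1)"
    and "\<exists>C. \<forall>t. 0 < t \<longrightarrow> t \<le> 1 \<longrightarrow>
           cmod (ps_eval R' (of_real t * ray_z z \<zeta> t) (ray_zeta z \<zeta> t)) \<le> C * t ^ (\<nu> + 1)"
  shows "(\<forall>\<mu>\<in>{3..\<nu>-1}. ps_eval (G' \<mu>) z \<zeta> = ps_eval (G \<mu>) z \<zeta>) \<and>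
         ps_eval (G' \<nu>) z \<zeta>
           = ps_eval (G \<nu>) z \<zeta> - of_real (2 * Re (mfun_holo_deriv z \<zeta> (f z \<zeta>) (g z \<zeta>) - h z \<zeta> / 2))"
proof -
  define \<Delta> where "\<Delta> \<mu> = ps_eval (G' \<mu>) z \<zeta> - ps_eval (G \<mu>) z \<zeta>" for \<mu>
  define c :: complex where "c = of_real (2 * Re (mfun_holo_deriv z \<zeta> (f z \<zeta>) (g z \<zeta>))) - of_real (Re (h z \<zeta>))"
  define d where "d k = (if k \<in> {3..\<nu>} then \<Delta> k else 0) + (if k = \<nu> then c else 0)" for k
  have "(\<Sum>k\<le>\<nu>. d k * of_real t ^ k) = (\<Sum>\<mu>=3..\<nu>. \<Delta> \<mu> * of_real t ^ \<mu>) + c * of_real t ^ \<nu>" for t :: real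
  proof -
    have "(\<Sum>k\<le>\<nu>. d k * of_real t ^ k)
        = (\<Sum>k\<le>\<nu>. if k \<in> {3..\<nu>} then \<Delta> k * of_real t ^ k else 0) + (\<Sum>k\<le>\<nu>. if k = \<nu> then c * of_real t ^ k else 0)"
      unfolding sum.distrib[symmetric] by (rule sum.cong) (auto simp: d_def distrib_right)
    then show ?thesis
      unfolding sum.inter_restrict[OF finite_atMost, symmetric] by (simp add: Int_absorb1)
  qed
  then have "((\<lambda>t. (\<Sum>k\<le>\<nu>. d k * of_real t ^ k) / of_real t ^ \<nu>) \<longlongrightarrow> 0) (at_right 0)"
    using ray_defect_tendsto_0[OF assms] by (simp add: \<Delta>_def c_def)
  then have d: "\<forall>k\<le>\<nu>. d k = 0" by (rule poly_coeffs_eq_0_if_tendsto_0)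
  have "\<Delta> \<mu> = 0" if "\<mu> \<in> {3..\<nu>-1}" for \<mu>
  proof -
    have "\<mu> \<le> \<nu>" "\<mu> \<noteq> \<nu>" "\<mu> \<in> {3..\<nu>}" using that nu by auto
    with d[rule_format, of \<mu>] show ?thesis by (simp add: d_def)
  qed
  moreover have "ps_eval (G' \<nu>) z \<zeta> = ps_eval (G \<nu>) z \<zeta> - c"
    using d[rule_format, of \<nu>] nu unfolding d_def \<Delta>_def by simp algebra
  ultimately show ?thesis by (simp add: \<Delta>_def c_def)
qed

lemma eventually_ray_small:
  assumes "\<epsilon> > 0"
  shows "\<forall>\<^sub>F (z, \<zeta>) in nhds (0, 0). cmod z + cmod (f z \<zeta>) < \<epsilon> \<and> cmod \<zeta> + cmod (g z \<zeta>) < \<epsilon>"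
proof -
  have "((\<lambda>p. cmod (fst p) + cmod (f (fst p) (snd p))) \<longlongrightarrow> cmod (fst (0::complex, 0::complex)) + 0) (nhds (0, 0))"
    "((\<lambda>p. cmod (snd p) + cmod (g (fst p) (snd p))) \<longlongrightarrow> cmod (snd (0::complex, 0::complex)) + 0) (nhds (0, 0))"
    using nu
    by (intro tendsto_add tendsto_norm tendsto_norm_zero tendsto_fst tendsto_snd filterlim_ident
          wt_hom_holo_tendsto_0[OF f_hom, unfolded case_prod_beta']
          wt_hom_holo_tendsto_0[OF g_hom, unfolded case_prod_beta'], simp)+
  then show ?thesis
    unfolding case_prod_beta' using assms by (auto intro!: eventually_conj dest: order_tendstoD(2))
qed

lemma norm_ray_le:
  assumes "0 < t" and "t \<le> 1"
  shows "cmod (ray_z z \<zeta> t) \<le> cmod z + cmod (f z \<zeta>)"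
    and "cmod (ray_zeta z \<zeta> t) \<le> cmod \<zeta> + cmod (g z \<zeta>)"
  unfolding ray_z_def ray_zeta_def using assms by (intro norm_add_scaled_le zero_le_power power_le_one; simp)+

lemma eventually_ray_related:
  "\<forall>\<^sub>F (z, \<zeta>) in nhds (0, 0). \<forall>t. 0 < t \<longrightarrow> t \<le> 1 \<longrightarrow>
     expansion_sum \<nu> G R (of_real t * z) \<zeta> + of_real (Re (h (of_real t * z) \<zeta>))
     = expansion_sum \<nu> G' R' (of_real t * z + f (of_real t * z) \<zeta>) (\<zeta> + g (of_real t * z) \<zeta>)"
proof -
  obtain \<delta> where "\<delta> > 0" and related: "\<And>x y. cmod x < \<delta> \<Longrightarrow> cmod y < \<delta> \<Longrightarrow>
      expansion_sum \<nu> G R x y + of_real (Re (h x y)) = expansion_sum \<nu> G' R' (x + f x y) (y + g x y)"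
    using eventually_expansions_related unfolding eventually_nhds_0_polydisc by auto
  have "cmod (of_real t * z) < \<delta>" if "0 < t" "t \<le> 1" "cmod z < \<delta>" for t z
    using norm_scaled_le[of t z] that by simp
  with \<open>\<delta> > 0\<close> related show ?thesis
    unfolding eventually_nhds_0_polydisc by blast
qed

lemma eventually_ray_lipschitz:
  "\<forall>\<^sub>F (z, \<zeta>) in nhds (0, 0). \<forall>\<mu>\<in>{3..\<nu>}. \<exists>K. \<forall>t. 0 < t \<longrightarrow> t \<le> 1 \<longrightarrow>
     cmod (ps_eval (G' \<mu>) (ray_z z \<zeta> t) (ray_zeta z \<zeta> t) - ps_eval (G' \<mu>) z \<zeta>) \<le> K * t ^ (\<nu> - 2)"
proof -
  have "\<forall>\<^sub>F (z, \<zeta>) in nhds (0, 0). \<exists>K. \<forall>t. 0 < t \<longrightarrow> t \<le> 1 \<longrightarrow>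
     cmod (ps_eval (G' \<mu>) (ray_z z \<zeta> t) (ray_zeta z \<zeta> t) - ps_eval (G' \<mu>) z \<zeta>) \<le> K * t ^ (\<nu> - 2)"
    if "\<mu> \<in> {3..\<nu>}" for \<mu>
  proof -
    have "ps_convergent (G' \<mu>)" using expansion' that unfolding rigid_expansion_def by auto
    obtain \<rho> K where "\<rho> > 0"
      and lip: "\<And>x1 y1 x2 y2. cmod x1 \<le> \<rho> \<Longrightarrow> cmod y1 \<le> \<rho> \<Longrightarrow> cmod x2 \<le> \<rho> \<Longrightarrow> cmod y2 \<le> \<rho> \<Longrightarrow>
         cmod (ps_eval (G' \<mu>) x1 y1 - ps_eval (G' \<mu>) x2 y2) \<le> K * (cmod (x1 - x2) + cmod (y1 - y2))"
      using ps_eval_lipschitz[OF \<open>ps_convergent (G' \<mu>)\<close>] by blast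
    show ?thesis
    proof (rule eventually_mono[OF eventually_ray_small[OF \<open>\<rho> > 0\<close>]], clarify)
      fix z \<zeta> assume small: "cmod z + cmod (f z \<zeta>) < \<rho>" "cmod \<zeta> + cmod (g z \<zeta>) < \<rho>"
      have "cmod (ps_eval (G' \<mu>) (ray_z z \<zeta> t) (ray_zeta z \<zeta> t) - ps_eval (G' \<mu>) z \<zeta>)
          \<le> (K * (cmod (f z \<zeta>) + cmod (g z \<zeta>))) * t ^ (\<nu> - 2)" if t: "0 < t" "t \<le> 1" for t
      proof -
        have "cmod (ps_eval (G' \<mu>) (ray_z z \<zeta> t) (ray_zeta z \<zeta> t) - ps_eval (G' \<mu>) z \<zeta>)
            \<le> K * (cmod (ray_z z \<zeta> t - z) + cmod (ray_zeta z \<zeta> t - \<zeta>))"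
          using small norm_ray_le[OF t, of z \<zeta>] norm_ge_zero[of "f z \<zeta>"] norm_ge_zero[of "g z \<zeta>"]
          by (intro lip; linarith)
        also have "\<dots> = (K * (cmod (f z \<zeta>) + cmod (g z \<zeta>))) * t ^ (\<nu> - 2)"
          using t by (simp add: ray_z_def ray_zeta_def norm_mult norm_power algebra_simps)
        finally show ?thesis .
      qed
      then show "\<exists>K. \<forall>t. 0 < t \<longrightarrow> t \<le> 1 \<longrightarrow>
          cmod (ps_eval (G' \<mu>) (ray_z z \<zeta> t) (ray_zeta z \<zeta> t) - ps_eval (G' \<mu>) z \<zeta>) \<le> K * t ^ (\<nu> - 2)"
        by blast
    qed
  qed
  then show ?thesis
    unfolding case_prod_beta' by (subst eventually_ball_finite_distrib) auto
qed

lemma eventually_remainder_bounds: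
  "\<forall>\<^sub>F (z, \<zeta>) in nhds (0, 0).
     (\<exists>C. \<forall>t. 0 < t \<longrightarrow> t \<le> 1 \<longrightarrow> cmod (ps_eval R (of_real t * z) \<zeta>) \<le> C * t ^ (\<nu> + 1)) \<and>
     (\<exists>C. \<forall>t. 0 < t \<longrightarrow> t \<le> 1 \<longrightarrow> cmod (ps_eval R' (of_real t * ray_z z \<zeta> t) (ray_zeta z \<zeta> t)) \<le> C * t ^ (\<nu> + 1))"
proof -
  have "wt_ge (\<nu> + 1) R" "ps_convergent R" "wt_ge (\<nu> + 1) R'" "ps_convergent R'"
    using expansion expansion' unfolding rigid_expansion_def by auto
  obtain \<rho> C where "\<rho> > 0" "C \<ge> 0"
    and R: "\<And>x y. cmod x \<le> \<rho> \<Longrightarrow> cmod y \<le> \<rho> \<Longrightarrow> cmod (ps_eval R x y) \<le> C * cmod x ^ (\<nu> + 1)"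
    using ps_eval_wt_ge_bound[OF \<open>wt_ge (\<nu> + 1) R\<close> \<open>ps_convergent R\<close>] by blast
  obtain \<rho>' C' where "\<rho>' > 0" "C' \<ge> 0"
    and R': "\<And>x y. cmod x \<le> \<rho>' \<Longrightarrow> cmod y \<le> \<rho>' \<Longrightarrow> cmod (ps_eval R' x y) \<le> C' * cmod x ^ (\<nu> + 1)"
    using ps_eval_wt_ge_bound[OF \<open>wt_ge (\<nu> + 1) R'\<close> \<open>ps_convergent R'\<close>] by blast
  have "\<forall>\<^sub>F (z, \<zeta>) in nhds (0, 0). (cmod z + cmod (f z \<zeta>) < \<rho> \<and> cmod \<zeta> + cmod (g z \<zeta>) < \<rho>)
      \<and> (cmod z + cmod (f z \<zeta>) < \<rho>' \<and> cmod \<zeta> + cmod (g z \<zeta>) < \<rho>')"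
    using eventually_conj[OF eventually_ray_small[OF \<open>\<rho> > 0\<close>] eventually_ray_small[OF \<open>\<rho>' > 0\<close>]]
    by (simp add: case_prod_beta')
  then show ?thesis
  proof (rule eventually_mono, clarify, intro conjI exI allI impI)
    fix z \<zeta> :: complex and t :: real assume small: "cmod z + cmod (f z \<zeta>) < \<rho>" "cmod \<zeta> + cmod (g z \<zeta>) < \<rho>"
      "cmod z + cmod (f z \<zeta>) < \<rho>'" "cmod \<zeta> + cmod (g z \<zeta>) < \<rho>'" and t: "0 < t" "t \<le> 1"
    have "cmod (ps_eval R (of_real t * z) \<zeta>) \<le> C * cmod (of_real t * z) ^ (\<nu> + 1)"
      using small(1,2) norm_scaled_le[of t z] t norm_ge_zero[of "f z \<zeta>"] norm_ge_zero[of "g z \<zeta>"]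
      by (intro R; linarith)
    then show "cmod (ps_eval R (of_real t * z) \<zeta>) \<le> (C * cmod z ^ (\<nu> + 1)) * t ^ (\<nu> + 1)"
      using t by (simp add: norm_mult power_mult_distrib mult_ac)
    have "cmod (ray_z z \<zeta> t) \<le> \<rho>'" "cmod (ray_zeta z \<zeta> t) \<le> \<rho>'"
      using small(3,4) norm_ray_le[OF t, of z \<zeta>] by auto
    then have "cmod (ps_eval R' (of_real t * ray_z z \<zeta> t) (ray_zeta z \<zeta> t)) \<le> C' * cmod (of_real t * ray_z z \<zeta> t) ^ (\<nu> + 1)"
      using norm_scaled_le[of t "ray_z z \<zeta> t"] t by (intro R') auto
    also have "\<dots> = C' * (t * cmod (ray_z z \<zeta> t)) ^ (\<nu> + 1)"
      using t by (simp add: norm_mult)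
    also have "\<dots> \<le> C' * (t * \<rho>') ^ (\<nu> + 1)"
      using \<open>C' \<ge> 0\<close> t \<open>cmod (ray_z z \<zeta> t) \<le> \<rho>'\<close> by (intro mult_left_mono power_mono mult_left_mono) auto
    finally show "cmod (ps_eval R' (of_real t * ray_z z \<zeta> t) (ray_zeta z \<zeta> t)) \<le> (C' * \<rho>' ^ (\<nu> + 1)) * t ^ (\<nu> + 1)"
      by (simp add: power_mult_distrib mult_ac)
  qed
qed

lemma eventually_normal_form_relations:
  "\<forall>\<^sub>F (z, \<zeta>) in nhds (0, 0).
     (\<forall>\<mu>\<in>{3..\<nu>-1}. ps_eval (G' \<mu>) z \<zeta> = ps_eval (G \<mu>) z \<zeta>) \<and>
     ps_eval (G' \<nu>) z \<zeta>
       = ps_eval (G \<nu>) z \<zeta> - of_real (2 * Re (mfun_holo_deriv z \<zeta> (f z \<zeta>) (g z \<zeta>) - h z \<zeta> / 2))"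
proof -
  have "\<forall>\<^sub>F (z, \<zeta>) in nhds (0::complex, 0). cmod \<zeta> < 1"
    unfolding eventually_nhds_0_polydisc by (auto intro!: exI[of _ 1])
  with eventually_ray_related eventually_ray_lipschitz eventually_remainder_bounds show ?thesis
    unfolding case_prod_beta' by eventually_elim (rule ray_coefficients; blast)
qed

end

theorem proposition6p2:
  fixes \<nu> :: nat
    and F F' :: "complex \<Rightarrow> complex \<Rightarrow> real"
    and G G' :: "nat \<Rightarrow> coeffs4"
    and R R' :: coeffs4
    and f g h :: "complex \<Rightarrow> complex \<Rightarrow> complex"
  assumes "\<nu> \<ge> 3"
    and "rigid_expansion \<nu> F G R"
    and "rigid_expansion \<nu> F' G' R'"
    and "wt_hom_holo (\<nu> - 1) f"
    and "wt_hom_holo (\<nu> - 2) g"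
    and "wt_hom_holo \<nu> h"
    and maps: "\<forall>\<^sub>F (z, \<zeta>, w) in nhds (0, 0, 0).
               Re w = F z \<zeta> \<longrightarrow> Re (w + h z \<zeta>) = F' (z + f z \<zeta>) (\<zeta> + g z \<zeta>)"
  shows "(\<forall>\<mu>\<in>{3..\<nu>-1}. G' \<mu> = G \<mu>) \<and>
         (\<forall>\<^sub>F (z, \<zeta>) in nhds (0, 0).
            ps_eval (G' \<nu>) z \<zeta> = ps_eval (G \<nu>) z \<zeta>
              - complex_of_real (2 * Re (
                  (cnj z + z * cnj \<zeta>) / (1 - \<zeta> * cnj \<zeta>) * f z \<zeta>
                + (cnj z + z * cnj \<zeta>)^2 / (2 * (1 - \<zeta> * cnj \<zeta>)^2) * g z \<zeta>
                - h z \<zeta> / 2)))"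
proof -
  interpret rigid_normal_form_map \<nu> F F' G G' R R' f g h
    using assms by unfold_locales
  have "G' \<mu> = G \<mu>" if "\<mu> \<in> {3..\<nu>-1}" for \<mu>
  proof (rule ps_eval_eq_imp_coeffs_eq)
    show "ps_convergent (G' \<mu>)" "ps_convergent (G \<mu>)"
      using assms(2,3) that unfolding rigid_expansion_def by auto
    show "\<forall>\<^sub>F (x, y) in nhds (0, 0). ps_eval (G' \<mu>) x y = ps_eval (G \<mu>) x y"
      using eventually_normal_form_relations by (rule eventually_mono) (use that in auto)
  qed
  with eventually_normal_form_relations show ?thesis
    unfolding mfun_holo_deriv_def by (auto elim: eventually_mono)
qed

end
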